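(* Let $(M,\eta)$ be a set operad with natural Hopf algebra $\mathcal N_M$ and antipode $S$, and let $\omega:\mathcal N_M\to\mathcal A$ be an algebra homomorphism into a commutative $\mathbb K$-algebra $\mathcal A$. Then $M^{\omega\circ S}(x)$ is the compositional (substitutional) inverse of $M^{\omega}(x)$. In particular, taking $\mathcal A=\mathcal N_M$ and $\omega=I$ the identity, $M^S(x)=(M^I(x))^{\langle-1\rangle}$.
   Context: $\mathcal N_M$ is the polynomial algebra $\mathbb K[t_\alpha]$ indexed by types of $M$-structures, with $t_\bullet=1$ ($\bullet$ the singleton type). Its coproduct is $\Delta(t_{\tau(m)})=\sum_{\eta(a,m')=m}t_{\tau(a)}\otimes t_{\tau(m')}$, the sum over $(a,m')\in M(M)[U]$, with $t_{\tau(a)}=\prod_B t_{\tau(m_B)}$ for an assembly $a$. For an algebra homomorphism $\omega$ into $\mathcal A$, $M^\omega(x)=x+\sum_{n\ge2}\big(\sum_{m\in M[[n]]}\omega(t_{\tau(m)})\big)\frac{x^n}{n!}$. $f^{\langle-1\rangle}$ denotes the compositional inverse of a power series $f=x+O(x^2)$. *)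

theory Defs
  imports "HOL-Library.Poly_Mapping" "HOL-Library.Disjoint_Sets" "HOL-Library.FuncSet"
    "HOL-Computational_Algebra.Formal_Power_Series"
begin

text \<open>A species is given by M :: nat set => 'm set (the structures on a finite label set U)
  together with transport of structures rl sigma U m along a bijection sigma : U -> V.\<close>

definition species :: "(nat set \<Rightarrow> 'm set) \<Rightarrow> ((nat \<Rightarrow> nat) \<Rightarrow> nat set \<Rightarrow> 'm \<Rightarrow> 'm) \<Rightarrow> bool" where
  "species M rl \<longleftrightarrow>
     (\<forall>U. finite U \<longrightarrow> finite (M U)) \<and>
     (\<forall>U m. finite U \<longrightarrow> m \<in> M U \<longrightarrow> rl (\<lambda>x. x) U m = m) \<and>
     (\<forall>\<sigma> U V m. finite U \<longrightarrow> bij_betw \<sigma> U V \<longrightarrow> m \<in> M U \<longrightarrow> rl \<sigma> U m \<in> M V) \<and>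
     (\<forall>\<sigma> \<tau> U V W m. finite U \<longrightarrow> bij_betw \<sigma> U V \<longrightarrow> bij_betw \<tau> V W \<longrightarrow> m \<in> M U \<longrightarrow>
          rl (\<tau> \<circ> \<sigma>) U m = rl \<tau> V (rl \<sigma> U m)) \<and>
     (\<forall>\<sigma> \<sigma>' U m. (\<forall>x\<in>U. \<sigma> x = \<sigma>' x) \<longrightarrow> rl \<sigma> U m = rl \<sigma>' U m)"

definition blk :: "nat set set \<Rightarrow> nat \<Rightarrow> nat set" where
  "blk \<pi> x = (THE B. B \<in> \<pi> \<and> x \<in> B)"

text \<open>The blocks of pi are canonically labelled by their minima, so M(M)[U] consists of
  an assembly (pi, f) together with an M-structure on the label set Min ` pi.\<close>
definition assemblies :: "(nat set \<Rightarrow> 'm set) \<Rightarrow> nat set \<Rightarrow> (nat set set \<times> (nat set \<Rightarrow> 'm)) set" where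
  "assemblies M U = {(\<pi>, f). partition_on U \<pi> \<and> f \<in> extensional \<pi> \<and> (\<forall>B\<in>\<pi>. f B \<in> M B)}"

definition compM :: "(nat set \<Rightarrow> 'm set) \<Rightarrow> nat set \<Rightarrow> ((nat set set \<times> (nat set \<Rightarrow> 'm)) \<times> 'm) set" where
  "compM M U = {(a, m'). a \<in> assemblies M U \<and> m' \<in> M (Min ` fst a)}"

text \<open>A set operad (M, eta): a monoid in species under substitution, with unit X,
  M[{}] empty and M[{u}] a single element (the unit).\<close>

definition set_operad ::
  "(nat set \<Rightarrow> 'm set) \<Rightarrow> ((nat \<Rightarrow> nat) \<Rightarrow> nat set \<Rightarrow> 'm \<Rightarrow> 'm)
   \<Rightarrow> (nat set set \<times> (nat set \<Rightarrow> 'm) \<Rightarrow> 'm \<Rightarrow> 'm) \<Rightarrow> bool" where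
  "set_operad M rl \<eta> \<longleftrightarrow>
     species M rl \<and>
     M {} = {} \<and>
     (\<forall>u. \<exists>e. M {u} = {e}) \<and>
     \<comment> \<open>eta maps M(M)[U] to M[U]\<close>
     (\<forall>U a m'. finite U \<longrightarrow> (a, m') \<in> compM M U \<longrightarrow> \<eta> a m' \<in> M U) \<and>
     \<comment> \<open>naturality of eta\<close>
     (\<forall>\<sigma> U V \<pi> f m'. finite U \<longrightarrow> bij_betw \<sigma> U V \<longrightarrow> ((\<pi>, f), m') \<in> compM M U \<longrightarrow>
        rl \<sigma> U (\<eta> (\<pi>, f) m') =
        \<eta> ((`) \<sigma> ` \<pi>,
            restrict (\<lambda>B'. rl \<sigma> (inv_into U \<sigma> ` B') (f (inv_into U \<sigma> ` B'))) ((`) \<sigma> ` \<pi>))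
          (rl (\<lambda>x. Min (\<sigma> ` blk \<pi> x)) (Min ` \<pi>) m')) \<and>
     \<comment> \<open>left unit law\<close>
     (\<forall>U m. finite U \<longrightarrow> U \<noteq> {} \<longrightarrow> m \<in> M U \<longrightarrow>
        \<eta> ((\<lambda>u. {u}) ` U, restrict (\<lambda>B. the_elem (M B)) ((\<lambda>u. {u}) ` U)) m = m) \<and>
     \<comment> \<open>right unit law\<close>
     (\<forall>U m. finite U \<longrightarrow> U \<noteq> {} \<longrightarrow> m \<in> M U \<longrightarrow>
        \<eta> ({U}, restrict (\<lambda>_. m) {U}) (the_elem (M {Min U})) = m) \<and>
     \<comment> \<open>associativity: eta o (M o eta) = eta o (eta o M) on M(M(M))[U]\<close>
     (\<forall>U \<pi> \<sigma> g h m''. finite U \<longrightarrow> partition_on U \<pi> \<longrightarrow>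
        (\<forall>B\<in>\<pi>. (\<sigma> B, g B) \<in> assemblies M B \<and> h B \<in> M (Min ` \<sigma> B)) \<longrightarrow>
        m'' \<in> M (Min ` \<pi>) \<longrightarrow>
        \<eta> (\<pi>, restrict (\<lambda>B. \<eta> (\<sigma> B, g B) (h B)) \<pi>) m'' =
        \<eta> (\<Union>(\<sigma> ` \<pi>), restrict (\<lambda>C. g (blk \<pi> (Min C)) C) (\<Union>(\<sigma> ` \<pi>)))
          (\<eta> ((\<lambda>B. Min ` \<sigma> B) ` \<pi>,
               restrict (\<lambda>D. h (blk \<pi> (Min D))) ((\<lambda>B. Min ` \<sigma> B) ` \<pi>)) m''))"

definition tp :: "((nat \<Rightarrow> nat) \<Rightarrow> nat set \<Rightarrow> 'm \<Rightarrow> 'm) \<Rightarrow> nat set \<Rightarrow> 'm \<Rightarrow> (nat set \<times> 'm) set" where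
  "tp rl U m = {(V, rl \<sigma> U m) | \<sigma> V. bij_betw \<sigma> U V}"

definition types :: "(nat set \<Rightarrow> 'm set) \<Rightarrow> ((nat \<Rightarrow> nat) \<Rightarrow> nat set \<Rightarrow> 'm \<Rightarrow> 'm) \<Rightarrow> (nat set \<times> 'm) set set" where
  "types M rl = {tp rl U m | U m. finite U \<and> m \<in> M U}"

definition dot :: "(nat set \<Rightarrow> 'm set) \<Rightarrow> ((nat \<Rightarrow> nat) \<Rightarrow> nat set \<Rightarrow> 'm \<Rightarrow> 'm) \<Rightarrow> (nat set \<times> 'm) set" where
  "dot M rl = tp rl {1} (the_elem (M {1}))"

type_synonym ('v, 'k) mpoly = "('v \<Rightarrow>\<^sub>0 nat) \<Rightarrow>\<^sub>0 'k"

definition pconst :: "'k::zero \<Rightarrow> ('v, 'k) mpoly" where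
  "pconst c = Poly_Mapping.single 0 c"

definition pvar :: "'v \<Rightarrow> ('v, 'k::{zero,one}) mpoly" where
  "pvar v = Poly_Mapping.single (Poly_Mapping.single v 1) 1"

definition peval :: "('v \<Rightarrow> 'a::comm_semiring_1) \<Rightarrow> ('k::zero \<Rightarrow> 'a) \<Rightarrow> ('v, 'k) mpoly \<Rightarrow> 'a" where
  "peval \<phi> c p = (\<Sum>mn\<in>Poly_Mapping.keys p. c (Poly_Mapping.lookup p mn) * (\<Prod>v\<in>Poly_Mapping.keys mn. \<phi> v ^ Poly_Mapping.lookup mn v))"

text \<open>N_M = K[t_alpha] with t_bullet = 1, realized as the subalgebra of polynomials in the
  variables t_alpha, alpha ranging over the types different from bullet.\<close>
definition NM :: "(nat set \<Rightarrow> 'm set) \<Rightarrow> ((nat \<Rightarrow> nat) \<Rightarrow> nat set \<Rightarrow> 'm \<Rightarrow> 'm)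
   \<Rightarrow> ((nat set \<times> 'm) set, 'k::zero) mpoly set" where
  "NM M rl = {p. \<forall>mn\<in>Poly_Mapping.keys p. \<forall>\<alpha>\<in>Poly_Mapping.keys mn. \<alpha> \<in> types M rl \<and> \<alpha> \<noteq> dot M rl}"

definition tvar :: "(nat set \<Rightarrow> 'm set) \<Rightarrow> ((nat \<Rightarrow> nat) \<Rightarrow> nat set \<Rightarrow> 'm \<Rightarrow> 'm)
   \<Rightarrow> (nat set \<times> 'm) set \<Rightarrow> ((nat set \<times> 'm) set, 'k::comm_semiring_1) mpoly" where
  "tvar M rl \<alpha> = (if \<alpha> = dot M rl then 1 else pvar \<alpha>)"

text \<open>N_M tensor N_M realized as K[t_alpha (x) 1, 1 (x) t_alpha]:
  variable (alpha, True) is t_alpha (x) 1, variable (alpha, False) is 1 (x) t_alpha.\<close>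
definition tvar2 :: "(nat set \<Rightarrow> 'm set) \<Rightarrow> ((nat \<Rightarrow> nat) \<Rightarrow> nat set \<Rightarrow> 'm \<Rightarrow> 'm)
   \<Rightarrow> (nat set \<times> 'm) set \<Rightarrow> bool \<Rightarrow> ((nat set \<times> 'm) set \<times> bool, 'k::comm_semiring_1) mpoly" where
  "tvar2 M rl \<alpha> b = (if \<alpha> = dot M rl then 1 else pvar (\<alpha>, b))"

definition coprod_str ::
  "(nat set \<Rightarrow> 'm set) \<Rightarrow> ((nat \<Rightarrow> nat) \<Rightarrow> nat set \<Rightarrow> 'm \<Rightarrow> 'm)
   \<Rightarrow> (nat set set \<times> (nat set \<Rightarrow> 'm) \<Rightarrow> 'm \<Rightarrow> 'm) \<Rightarrow> nat set \<Rightarrow> 'm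
   \<Rightarrow> ((nat set \<times> 'm) set \<times> bool, 'k::comm_semiring_1) mpoly" where
  "coprod_str M rl \<eta> U m =
     (\<Sum>((\<pi>, f), m') \<in> {((\<pi>, f), m') \<in> compM M U. \<eta> (\<pi>, f) m' = m}.
        (\<Prod>B\<in>\<pi>. tvar2 M rl (tp rl B (f B)) True) * tvar2 M rl (tp rl (Min ` \<pi>) m') False)"

text \<open>The coproduct, extended as an algebra homomorphism (using any representative of a type).\<close>
definition coprod ::
  "(nat set \<Rightarrow> 'm set) \<Rightarrow> ((nat \<Rightarrow> nat) \<Rightarrow> nat set \<Rightarrow> 'm \<Rightarrow> 'm)
   \<Rightarrow> (nat set set \<times> (nat set \<Rightarrow> 'm) \<Rightarrow> 'm \<Rightarrow> 'm)
   \<Rightarrow> ((nat set \<times> 'm) set, 'k::comm_semiring_1) mpoly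
   \<Rightarrow> ((nat set \<times> 'm) set \<times> bool, 'k) mpoly" where
  "coprod M rl \<eta> p = peval (\<lambda>\<alpha>. case (SOME x. x \<in> \<alpha>) of (U, m) \<Rightarrow> coprod_str M rl \<eta> U m) pconst p"

definition counit :: "('v, 'k::zero) mpoly \<Rightarrow> 'k" where
  "counit p = Poly_Mapping.lookup p 0"

text \<open>K-algebra homomorphisms from N_M into a commutative K-algebra A
  (the K-algebra structure of A being the ring homomorphism ofk : K -> A).\<close>
definition alg_hom_on :: "((nat set \<times> 'm) set, 'k::comm_ring_1) mpoly set \<Rightarrow> ('k \<Rightarrow> 'a::comm_ring_1)
   \<Rightarrow> (((nat set \<times> 'm) set, 'k) mpoly \<Rightarrow> 'a) \<Rightarrow> bool" where
  "alg_hom_on N ofk \<omega> \<longleftrightarrow>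
     \<omega> 1 = 1 \<and>
     (\<forall>p\<in>N. \<forall>q\<in>N. \<omega> (p + q) = \<omega> p + \<omega> q \<and> \<omega> (p * q) = \<omega> p * \<omega> q) \<and>
     (\<forall>c. \<forall>p\<in>N. \<omega> (pconst c * p) = ofk c * \<omega> p)"

definition ring_hom_k :: "('k::comm_ring_1 \<Rightarrow> 'a::comm_ring_1) \<Rightarrow> bool" where
  "ring_hom_k ofk \<longleftrightarrow> ofk 1 = 1 \<and> (\<forall>a b. ofk (a + b) = ofk a + ofk b \<and> ofk (a * b) = ofk a * ofk b)"

text \<open>The antipode S of N_M: the algebra endomorphism of N_M with
  mult o (S (x) id) o Delta = unit o counit.\<close>
definition is_antipode ::
  "(nat set \<Rightarrow> 'm set) \<Rightarrow> ((nat \<Rightarrow> nat) \<Rightarrow> nat set \<Rightarrow> 'm \<Rightarrow> 'm)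
   \<Rightarrow> (nat set set \<times> (nat set \<Rightarrow> 'm) \<Rightarrow> 'm \<Rightarrow> 'm)
   \<Rightarrow> (((nat set \<times> 'm) set, 'k::comm_ring_1) mpoly \<Rightarrow> ((nat set \<times> 'm) set, 'k) mpoly) \<Rightarrow> bool" where
  "is_antipode M rl \<eta> S \<longleftrightarrow>
     S ` NM M rl \<subseteq> NM M rl \<and> alg_hom_on (NM M rl) pconst S \<and>
     (\<forall>p\<in>NM M rl.
        peval (\<lambda>(\<alpha>, b). if b then S (tvar M rl \<alpha>) else tvar M rl \<alpha>) pconst (coprod M rl \<eta> p)
        = pconst (counit p))"

definition Mser :: "(nat set \<Rightarrow> 'm set) \<Rightarrow> ((nat \<Rightarrow> nat) \<Rightarrow> nat set \<Rightarrow> 'm \<Rightarrow> 'm)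
   \<Rightarrow> ('k::field_char_0 \<Rightarrow> 'a::comm_ring_1)
   \<Rightarrow> (((nat set \<times> 'm) set, 'k) mpoly \<Rightarrow> 'a) \<Rightarrow> 'a fps" where
  "Mser M rl ofk \<omega> = Abs_fps (\<lambda>n.
      if n = 1 then 1
      else if n \<ge> 2 then (\<Sum>m\<in>M {1..n}. \<omega> (tvar M rl (tp rl {1..n} m))) * ofk (1 / fact n)
      else 0)"

end

theory Submission
  imports Defs
begin

text \<open>
  Expanding powers of an exponential generating series by set partitions shows that \<open>n!\<close> times
  the \<open>n\<close>-th coefficient of \<open>M\<^sup>\<omega> \<circ> M\<^sup>\<omega>\<^sup>'\<close> is the sum over \<open>M(M)[n]\<close> of
  \<open>\<omega>(t\<^sub>\<tau>\<^sub>(\<^sub>m\<^sub>'\<^sub>)) \<Prod>\<^sub>B \<omega>'(t\<^sub>\<tau>\<^sub>(\<^sub>m\<^sub>B\<^sub>))\<close>. For \<open>\<omega>' = \<omega> \<circ> S\<close> and \<open>n \<ge> 2\<close>, group the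
  terms along the fibres of \<open>\<eta>\<close>: the fibre over \<open>m\<close> contributes \<open>\<omega>\<close> of
  \<open>\<mu> (S \<otimes> id) \<Delta>(t\<^sub>\<tau>\<^sub>(\<^sub>m\<^sub>))\<close>, which the antipode identity makes \<open>\<epsilon>(t\<^sub>\<tau>\<^sub>(\<^sub>m\<^sub>)) = 0\<close>.
  Hence \<open>M\<^sup>\<omega> \<circ> M\<^sup>\<omega>\<^sup>\<circ>\<^sup>S = x\<close>, and a left inverse of a series \<open>x + O(x\<^sup>2)\<close> is also a right
  inverse. The antipode exists because the same identity, with the two compositions coming from
  the unit laws split off, determines \<open>S(t\<^sub>\<alpha>)\<close> recursively through types of smaller size.
\<close>

unbundle fps_syntax

section \<open>Substitution into polynomials\<close>

lemma poly_mapping_eq_sum_single: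
  "p = (\<Sum>a\<in>Poly_Mapping.keys p. Poly_Mapping.single a (Poly_Mapping.lookup p a))"
  by (rule poly_mapping_eqI)
     (simp add: lookup_sum lookup_single when_def in_keys_iff sum.delta' split: if_splits)

lemma pconst_0 [simp]: "pconst 0 = 0"
  by (simp add: pconst_def)

lemma pconst_1 [simp]: "pconst 1 = 1"
  by (simp add: pconst_def)

lemma pconst_add: "pconst (a + b) = pconst a + pconst b"
  by (simp add: pconst_def single_add)

lemma pconst_mult: "pconst ((a::'k::comm_semiring_1) * b) = pconst a * pconst b"
  by (simp add: pconst_def mult_single)

definition monom_eval :: "('v \<Rightarrow> 'a::comm_semiring_1) \<Rightarrow> ('v \<Rightarrow>\<^sub>0 nat) \<Rightarrow> 'a" where
  "monom_eval \<phi> mn = (\<Prod>v\<in>Poly_Mapping.keys mn. \<phi> v ^ Poly_Mapping.lookup mn v)"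

lemma monom_eval_superset:
  assumes "finite S" "Poly_Mapping.keys mn \<subseteq> S"
  shows "monom_eval \<phi> mn = (\<Prod>v\<in>S. \<phi> v ^ Poly_Mapping.lookup mn v)"
  unfolding monom_eval_def
  by (rule prod.mono_neutral_left[OF assms]) (auto simp: in_keys_iff)

lemma monom_eval_0 [simp]: "monom_eval \<phi> 0 = 1"
  by (simp add: monom_eval_def)

lemma monom_eval_add: "monom_eval \<phi> (a + b) = monom_eval \<phi> a * monom_eval \<phi> b"
proof -
  let ?S = "Poly_Mapping.keys a \<union> Poly_Mapping.keys b"
  have "monom_eval \<phi> (a + b) = (\<Prod>v\<in>?S. \<phi> v ^ Poly_Mapping.lookup (a + b) v)"
    by (rule monom_eval_superset) (auto simp: keys_add)
  also have "\<dots> = (\<Prod>v\<in>?S. \<phi> v ^ Poly_Mapping.lookup a v) * (\<Prod>v\<in>?S. \<phi> v ^ Poly_Mapping.lookup b v)"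
    by (simp add: lookup_add power_add prod.distrib)
  also have "\<dots> = monom_eval \<phi> a * monom_eval \<phi> b"
    by (simp add: monom_eval_superset[of ?S a] monom_eval_superset[of ?S b])
  finally show ?thesis .
qed

abbreviation psubst :: "('v \<Rightarrow> ('w, 'k::comm_ring_1) mpoly) \<Rightarrow> ('v, 'k) mpoly \<Rightarrow> ('w, 'k) mpoly" where
  "psubst \<phi> \<equiv> peval \<phi> pconst"

lemma peval_eq_sum_monom_eval:
  "peval \<phi> c p = (\<Sum>mn\<in>Poly_Mapping.keys p. c (Poly_Mapping.lookup p mn) * monom_eval \<phi> mn)"
  by (simp add: peval_def monom_eval_def)

lemma psubst_superset:
  assumes "finite S" "Poly_Mapping.keys p \<subseteq> S"
  shows "psubst \<phi> p = (\<Sum>mn\<in>S. pconst (Poly_Mapping.lookup p mn) * monom_eval \<phi> mn)"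
  unfolding peval_eq_sum_monom_eval
  by (rule sum.mono_neutral_left[OF assms]) (auto simp: in_keys_iff)

lemma psubst_0 [simp]: "psubst \<phi> 0 = 0"
  by (simp add: peval_def)

lemma psubst_add: "psubst \<phi> (p + q) = psubst \<phi> p + psubst \<phi> q"
proof -
  let ?S = "Poly_Mapping.keys p \<union> Poly_Mapping.keys q"
  have "psubst \<phi> (p + q) = (\<Sum>mn\<in>?S. pconst (Poly_Mapping.lookup (p + q) mn) * monom_eval \<phi> mn)"
    by (rule psubst_superset) (auto simp: keys_add)
  also have "\<dots> = psubst \<phi> p + psubst \<phi> q"
    by (simp add: lookup_add pconst_add distrib_right sum.distrib
        psubst_superset[of ?S p] psubst_superset[of ?S q])
  finally show ?thesis .
qed

lemma psubst_sum: "psubst \<phi> (sum f A) = (\<Sum>a\<in>A. psubst \<phi> (f a))"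
  by (induction A rule: infinite_finite_induct) (auto simp: psubst_add)

lemma psubst_single: "psubst \<phi> (Poly_Mapping.single a c) = pconst c * monom_eval \<phi> a"
  by (cases "c = 0") (simp_all add: peval_eq_sum_monom_eval)

lemma psubst_mult: "psubst \<phi> (p * q) = psubst \<phi> p * psubst \<phi> q"
proof -
  have "p * q = (\<Sum>a\<in>Poly_Mapping.keys p. \<Sum>b\<in>Poly_Mapping.keys q.
          Poly_Mapping.single a (Poly_Mapping.lookup p a) * Poly_Mapping.single b (Poly_Mapping.lookup q b))"
    by (subst poly_mapping_eq_sum_single[of p], subst poly_mapping_eq_sum_single[of q])
       (simp add: sum_product)
  then have "psubst \<phi> (p * q) = (\<Sum>a\<in>Poly_Mapping.keys p. \<Sum>b\<in>Poly_Mapping.keys q.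
          (pconst (Poly_Mapping.lookup p a) * monom_eval \<phi> a) * (pconst (Poly_Mapping.lookup q b) * monom_eval \<phi> b))"
    by (simp add: psubst_sum mult_single psubst_single pconst_mult monom_eval_add mult_ac)
  also have "\<dots> = psubst \<phi> p * psubst \<phi> q"
    by (simp add: peval_eq_sum_monom_eval sum_product)
  finally show ?thesis .
qed

lemma psubst_pconst [simp]: "psubst \<phi> (pconst c) = pconst c"
  by (simp add: pconst_def psubst_single)

lemma psubst_1 [simp]: "psubst \<phi> 1 = 1"
  by (metis psubst_pconst pconst_1)

lemma psubst_pvar [simp]: "psubst \<phi> (pvar v) = \<phi> v"
  by (simp add: pvar_def psubst_single monom_eval_def)

lemma psubst_prod: "psubst \<phi> (prod f A) = (\<Prod>a\<in>A. psubst \<phi> (f a))"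
  by (induction A rule: infinite_finite_induct) (auto simp: psubst_mult)

lemma psubst_power: "psubst \<phi> (p ^ n) = psubst \<phi> p ^ n"
  by (induction n) (auto simp: psubst_mult)

lemma psubst_monom_eval: "psubst \<psi> (monom_eval \<phi> mn) = monom_eval (\<lambda>v. psubst \<psi> (\<phi> v)) mn"
  by (simp add: monom_eval_def psubst_prod psubst_power)

lemma psubst_psubst: "psubst \<psi> (psubst \<phi> p) = psubst (\<lambda>v. psubst \<psi> (\<phi> v)) p"
proof -
  have "psubst \<psi> (psubst \<phi> p) =
      psubst \<psi> (\<Sum>mn\<in>Poly_Mapping.keys p. pconst (Poly_Mapping.lookup p mn) * monom_eval \<phi> mn)"
    by (subst peval_eq_sum_monom_eval) (rule refl)
  also have "\<dots> = (\<Sum>mn\<in>Poly_Mapping.keys p.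
      pconst (Poly_Mapping.lookup p mn) * monom_eval (\<lambda>v. psubst \<psi> (\<phi> v)) mn)"
    by (simp only: psubst_sum psubst_mult psubst_monom_eval psubst_pconst)
  also have "\<dots> = psubst (\<lambda>v. psubst \<psi> (\<phi> v)) p"
    by (rule peval_eq_sum_monom_eval[symmetric])
  finally show ?thesis .
qed

lemma psubst_eq_constant_term:
  assumes "\<And>mn v. mn \<in> Poly_Mapping.keys p \<Longrightarrow> v \<in> Poly_Mapping.keys mn \<Longrightarrow> \<phi> v = 0"
  shows "psubst \<phi> p = pconst (Poly_Mapping.lookup p 0)"
proof -
  have "monom_eval \<phi> mn = (if mn = 0 then 1 else 0)" if mn: "mn \<in> Poly_Mapping.keys p" for mn
  proof (cases "mn = 0")
    case False
    then obtain v where v: "v \<in> Poly_Mapping.keys mn"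
      by (metis keys_eq_empty ex_in_conv)
    then have "monom_eval \<phi> mn = 0"
      using assms[OF mn v] unfolding monom_eval_def
      by (intro prod_zero) (auto intro!: bexI[of _ v] simp: in_keys_iff zero_power)
    then show ?thesis
      using False by simp
  qed simp
  then have "psubst \<phi> p = (\<Sum>mn\<in>Poly_Mapping.keys p. pconst (Poly_Mapping.lookup p mn) * (if mn = 0 then 1 else 0))"
    by (simp add: peval_eq_sum_monom_eval cong: sum.cong)
  also have "\<dots> = pconst (Poly_Mapping.lookup p 0)"
    by (simp add: if_distrib[of "\<lambda>x. _ * x"] sum.delta' in_keys_iff cong: if_cong)
  finally show ?thesis .
qed

section \<open>Species and types of structures\<close>

locale species_on =
  fixes M :: "nat set \<Rightarrow> 'm set" and rl :: "(nat \<Rightarrow> nat) \<Rightarrow> nat set \<Rightarrow> 'm \<Rightarrow> 'm"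
  assumes species: "species M rl"
begin

lemma finite_structures: "finite U \<Longrightarrow> finite (M U)"
  using species unfolding species_def by (elim conjE; metis)

lemma transport_id: "finite U \<Longrightarrow> m \<in> M U \<Longrightarrow> rl (\<lambda>x. x) U m = m"
  using species unfolding species_def by (elim conjE; metis)

lemma transport_in: "finite U \<Longrightarrow> bij_betw \<sigma> U V \<Longrightarrow> m \<in> M U \<Longrightarrow> rl \<sigma> U m \<in> M V"
  using species unfolding species_def by (elim conjE; metis)

lemma transport_comp:
  "finite U \<Longrightarrow> bij_betw \<sigma> U V \<Longrightarrow> bij_betw \<tau> V W \<Longrightarrow> m \<in> M U \<Longrightarrow>
     rl (\<tau> \<circ> \<sigma>) U m = rl \<tau> V (rl \<sigma> U m)"
  using species unfolding species_def by (elim conjE; metis)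

lemma transport_cong: "(\<And>x. x \<in> U \<Longrightarrow> \<sigma> x = \<sigma>' x) \<Longrightarrow> rl \<sigma> U m = rl \<sigma>' U m"
  using species unfolding species_def by (elim conjE; metis)

lemma transport_inv:
  assumes "finite U" "bij_betw \<sigma> U V" "m \<in> M U"
  shows "rl (inv_into U \<sigma>) V (rl \<sigma> U m) = m"
proof -
  have "rl (inv_into U \<sigma>) V (rl \<sigma> U m) = rl (inv_into U \<sigma> \<circ> \<sigma>) U m"
    using transport_comp[OF assms(1,2) bij_betw_inv_into[OF assms(2)] assms(3)] by simp
  also have "\<dots> = rl (\<lambda>x. x) U m"
    using assms(2) by (intro transport_cong) (simp add: bij_betw_def inv_into_f_f)
  finally show ?thesis
    using transport_id assms by simp
qed

lemma bij_betw_transport: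
  assumes "finite U" "bij_betw \<sigma> U V"
  shows "bij_betw (rl \<sigma> U) (M U) (M V)"
proof (rule bij_betw_byWitness[where f' = "rl (inv_into U \<sigma>) V"])
  have fV: "finite V"
    using assms bij_betw_finite by blast
  have inv: "bij_betw (inv_into U \<sigma>) V U"
    using assms(2) by (rule bij_betw_inv_into)
  have "inv_into V (inv_into U \<sigma>) x = \<sigma> x" if "x \<in> U" for x
  proof -
    have "inv_into U \<sigma> (\<sigma> x) = x" "\<sigma> x \<in> V"
      using assms(2) that by (auto simp: bij_betw_def inv_into_f_f)
    then show ?thesis
      using inv_into_f_f[OF bij_betw_imp_inj_on[OF inv]] by metis
  qed
  then have "rl \<sigma> U m = rl (inv_into V (inv_into U \<sigma>)) U m" for m
    by (intro transport_cong) auto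
  then show "\<forall>m\<in>M V. rl \<sigma> U (rl (inv_into U \<sigma>) V m) = m"
    using transport_inv[OF fV inv] by simp
  show "\<forall>m\<in>M U. rl (inv_into U \<sigma>) V (rl \<sigma> U m) = m"
    using transport_inv assms by blast
  show "rl \<sigma> U ` M U \<subseteq> M V"
    using transport_in assms by blast
  show "rl (inv_into U \<sigma>) V ` M V \<subseteq> M U"
    using transport_in fV inv by blast
qed

lemma transport_inject:
  assumes "finite U" "bij_betw \<sigma> U V" "m \<in> M U" "m' \<in> M U" "rl \<sigma> U m = rl \<sigma> U m'"
  shows "m = m'"
  using inj_onD[OF bij_betw_imp_inj_on[OF bij_betw_transport[OF assms(1,2)]] assms(5,3,4)] .

lemma in_tp_self: "finite U \<Longrightarrow> m \<in> M U \<Longrightarrow> (U, m) \<in> tp rl U m"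
  unfolding tp_def using transport_id by (auto intro!: exI[of _ "\<lambda>x. x"] bij_betw_id[unfolded id_def])

lemma tp_transport:
  assumes "finite U" "bij_betw \<sigma> U V" "m \<in> M U"
  shows "tp rl V (rl \<sigma> U m) = tp rl U m"
proof (rule set_eqI, rule iffI)
  fix x
  assume "x \<in> tp rl V (rl \<sigma> U m)"
  then obtain \<tau> W where x: "x = (W, rl \<tau> V (rl \<sigma> U m))" "bij_betw \<tau> V W"
    unfolding tp_def by blast
  then have "x = (W, rl (\<tau> \<circ> \<sigma>) U m)"
    using transport_comp[OF assms(1,2) x(2) assms(3)] by simp
  then show "x \<in> tp rl U m"
    using bij_betw_trans[OF assms(2) x(2)] unfolding tp_def by blast
next
  fix x
  assume "x \<in> tp rl U m"
  then obtain \<rho> W where x: "x = (W, rl \<rho> U m)" "bij_betw \<rho> U W"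
    unfolding tp_def by blast
  have b: "bij_betw (\<rho> \<circ> inv_into U \<sigma>) V W"
    using bij_betw_inv_into[OF assms(2)] x(2) by (rule bij_betw_trans)
  have "rl (\<rho> \<circ> inv_into U \<sigma>) V (rl \<sigma> U m) = rl ((\<rho> \<circ> inv_into U \<sigma>) \<circ> \<sigma>) U m"
    using transport_comp[OF assms(1,2) b assms(3)] by simp
  also have "\<dots> = rl \<rho> U m"
    using assms(2) by (intro transport_cong) (simp add: bij_betw_def inv_into_f_f)
  finally show "x \<in> tp rl V (rl \<sigma> U m)"
    unfolding tp_def using x b by force
qed

lemma tp_memD:
  assumes "finite U" "m \<in> M U" "(V, m') \<in> tp rl U m"
  shows "finite V" "m' \<in> M V" "tp rl V m' = tp rl U m" "card V = card U"
proof -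
  obtain \<sigma> where \<sigma>: "m' = rl \<sigma> U m" "bij_betw \<sigma> U V"
    using assms(3) unfolding tp_def by blast
  show "finite V"
    using \<sigma> assms bij_betw_finite by blast
  show "m' \<in> M V"
    using \<sigma> transport_in assms by blast
  show "tp rl V m' = tp rl U m"
    using \<sigma> tp_transport assms by blast
  show "card V = card U"
    using \<sigma> bij_betw_same_card by metis
qed

lemma card_eq_if_tp_eq:
  assumes "finite U" "m \<in> M U" "finite V" "m' \<in> M V" "tp rl U m = tp rl V m'"
  shows "card U = card V"
  using tp_memD(4)[OF assms(1,2), of V m'] in_tp_self[OF assms(3,4)] assms(5) by simp

lemma sum_structures_card_eq:
  assumes "finite U" "finite V" "card U = card V"
  shows "(\<Sum>m\<in>M U. g (tp rl U m)) = (\<Sum>m\<in>M V. g (tp rl V m))"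
proof -
  obtain \<sigma> where \<sigma>: "bij_betw \<sigma> U V"
    using assms by (metis bij_betw_iff_card)
  show ?thesis
    using sum.reindex_bij_betw[OF bij_betw_transport[OF assms(1) \<sigma>], of "\<lambda>m. g (tp rl V m)"]
      tp_transport[OF assms(1) \<sigma>] by (simp cong: sum.cong)
qed

lemma tp_in_types: "finite U \<Longrightarrow> m \<in> M U \<Longrightarrow> tp rl U m \<in> types M rl"
  unfolding types_def by blast

end

lemma typesE:
  assumes "\<alpha> \<in> types M rl"
  obtains U m where "finite U" "m \<in> M U" "\<alpha> = tp rl U m"
  using assms unfolding types_def by blast

definition type_rep :: "(nat set \<times> 'm) set \<Rightarrow> nat set \<times> 'm" where
  "type_rep \<alpha> = (SOME x. x \<in> \<alpha>)"

definition type_size :: "(nat set \<times> 'm) set \<Rightarrow> nat" where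
  "type_size \<alpha> = card (fst (type_rep \<alpha>))"

lemma (in species_on) type_rep_tp:
  assumes "finite U" "m \<in> M U"
  defines "r \<equiv> type_rep (tp rl U m)"
  shows "r \<in> tp rl U m" "finite (fst r)" "snd r \<in> M (fst r)"
    "tp rl (fst r) (snd r) = tp rl U m" "type_size (tp rl U m) = card U"
proof -
  show r: "r \<in> tp rl U m"
    unfolding r_def type_rep_def using in_tp_self[OF assms(1,2)] by (rule someI)
  then show "finite (fst r)" "snd r \<in> M (fst r)" "tp rl (fst r) (snd r) = tp rl U m"
    "type_size (tp rl U m) = card U"
    using tp_memD[OF assms(1,2), of "fst r" "snd r"] by (auto simp: type_size_def r_def)
qed

lemma (in species_on) type_rep_of_type:
  assumes "\<alpha> \<in> types M rl"
  shows "finite (fst (type_rep \<alpha>))" "snd (type_rep \<alpha>) \<in> M (fst (type_rep \<alpha>))"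
    "tp rl (fst (type_rep \<alpha>)) (snd (type_rep \<alpha>)) = \<alpha>" "card (fst (type_rep \<alpha>)) = type_size \<alpha>"
proof -
  obtain U m where "finite U" "m \<in> M U" "\<alpha> = tp rl U m"
    using assms by (rule typesE)
  then show "finite (fst (type_rep \<alpha>))" "snd (type_rep \<alpha>) \<in> M (fst (type_rep \<alpha>))"
    "tp rl (fst (type_rep \<alpha>)) (snd (type_rep \<alpha>)) = \<alpha>" "card (fst (type_rep \<alpha>)) = type_size \<alpha>"
    using type_rep_tp[of U m] by (auto simp: type_size_def)
qed

section \<open>Set partitions\<close>

abbreviation singletons :: "nat set \<Rightarrow> nat set set" where
  "singletons U \<equiv> (\<lambda>u. {u}) ` U"

lemma blk_eqI: "partition_on U \<pi> \<Longrightarrow> B \<in> \<pi> \<Longrightarrow> x \<in> B \<Longrightarrow> blk \<pi> x = B"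
  unfolding blk_def by (rule the_equality) (auto simp: partition_on_def disjoint_def)

lemma partition_on_block_subset: "partition_on U \<pi> \<Longrightarrow> B \<in> \<pi> \<Longrightarrow> B \<subseteq> U"
  by (auto simp: partition_on_def)

lemma partition_on_block_nonempty: "partition_on U \<pi> \<Longrightarrow> B \<in> \<pi> \<Longrightarrow> B \<noteq> {}"
  by (auto simp: partition_on_def)

lemma partition_on_block_finite: "finite U \<Longrightarrow> partition_on U \<pi> \<Longrightarrow> B \<in> \<pi> \<Longrightarrow> finite B"
  by (meson partition_on_block_subset finite_subset)

lemma partition_on_block_eq:
  "partition_on U \<pi> \<Longrightarrow> B \<in> \<pi> \<Longrightarrow> B' \<in> \<pi> \<Longrightarrow> x \<in> B \<Longrightarrow> x \<in> B' \<Longrightarrow> B = B'"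
  by (auto simp: partition_on_def disjoint_def)

lemma partition_on_Min_in_block: "finite U \<Longrightarrow> partition_on U \<pi> \<Longrightarrow> B \<in> \<pi> \<Longrightarrow> Min B \<in> B"
  using partition_on_block_finite partition_on_block_nonempty Min_in by blast

lemma blk_Min: "finite U \<Longrightarrow> partition_on U \<pi> \<Longrightarrow> B \<in> \<pi> \<Longrightarrow> blk \<pi> (Min B) = B"
  by (meson blk_eqI partition_on_Min_in_block)

lemma inj_on_Min_partition: "finite U \<Longrightarrow> partition_on U \<pi> \<Longrightarrow> inj_on Min \<pi>"
  by (rule inj_onI) (metis partition_on_Min_in_block partition_on_block_eq)

lemma inj_on_image_blocks: "inj_on \<sigma> U \<Longrightarrow> partition_on U \<pi> \<Longrightarrow> inj_on ((`) \<sigma>) \<pi>"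
  by (rule inj_onI) (meson partition_on_block_subset inj_on_image_eq_iff)

lemma partition_on_image_bij:
  assumes "bij_betw \<sigma> U V" "partition_on U \<pi>"
  shows "partition_on V ((`) \<sigma> ` \<pi>)"
proof -
  have "partition_on (\<sigma> ` U) ((`) \<sigma> ` \<pi> - {{}})"
    using assms(1) by (intro partition_on_inj_image[OF assms(2)]) (simp add: bij_betw_def)
  moreover have "(`) \<sigma> ` \<pi> - {{}} = (`) \<sigma> ` \<pi>"
    using partition_on_block_nonempty[OF assms(2)] by blast
  ultimately show ?thesis
    using assms(1) by (simp add: bij_betw_def)
qed

lemma card_partition_less:
  assumes U: "finite U" and \<pi>: "partition_on U \<pi>" and not_singletons: "\<pi> \<noteq> singletons U"
  shows "card \<pi> < card U"
proof -
  have card_ge_1: "1 \<le> card B" if "B \<in> \<pi>" for B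
    using that partition_on_block_finite[OF U \<pi>] partition_on_block_nonempty[OF \<pi>]
    by (simp add: Suc_leI card_gt_0_iff)
  have "\<exists>B\<in>\<pi>. card B \<noteq> 1"
  proof (rule ccontr)
    assume "\<not> ?thesis"
    then have singleton: "\<exists>b. B = {b}" if "B \<in> \<pi>" for B
      using that by (meson card_1_singletonE)
    have "\<pi> = singletons U"
    proof (intro equalityI subsetI)
      fix B
      assume "B \<in> \<pi>"
      then show "B \<in> singletons U"
        using singleton partition_on_block_subset[OF \<pi>] by blast
    next
      fix S
      assume "S \<in> singletons U"
      then obtain u where "u \<in> U" "S = {u}"
        by blast
      moreover obtain B where "B \<in> \<pi>" "u \<in> B"
        using partition_onD1[OF \<pi>] \<open>u \<in> U\<close> by blast
      ultimately show "S \<in> \<pi>"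
        using singleton by fastforce
    qed
    then show False
      using not_singletons by simp
  qed
  then obtain B0 where "B0 \<in> \<pi>" "1 < card B0"
    using card_ge_1 by fastforce
  then have "(\<Sum>B\<in>\<pi>. (1::nat)) < (\<Sum>B\<in>\<pi>. card B)"
    using card_ge_1 finite_elements[OF U \<pi>] by (intro sum_strict_mono_ex1) auto
  then show ?thesis
    using product_partition[OF \<pi> partition_on_block_finite[OF U \<pi>]] by simp
qed

lemma card_block_less:
  assumes U: "finite U" and \<pi>: "partition_on U \<pi>" and not_trivial: "\<pi> \<noteq> {U}" and B: "B \<in> \<pi>"
  shows "card B < card U"
proof (rule ccontr)
  assume "\<not> ?thesis"
  then have "B = U"
    using card_subset_eq[OF U partition_on_block_subset[OF \<pi> B]]
      card_mono[OF U partition_on_block_subset[OF \<pi> B]] by simp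
  have "\<pi> = {U}"
  proof (intro equalityI subsetI)
    fix B'
    assume "B' \<in> \<pi>"
    moreover obtain x where "x \<in> B'"
      using partition_on_block_nonempty[OF \<pi> \<open>B' \<in> \<pi>\<close>] by blast
    ultimately show "B' \<in> {U}"
      using partition_on_block_eq[OF \<pi> _ B] partition_on_block_subset[OF \<pi>] \<open>B = U\<close> by blast
  qed (use B \<open>B = U\<close> in simp)
  then show False
    using not_trivial by simp
qed

abbreviation partitions_into :: "nat set \<Rightarrow> nat \<Rightarrow> nat set set set" where
  "partitions_into U k \<equiv> {\<pi>. partition_on U \<pi> \<and> card \<pi> = k}"

lemma finite_partitions_into: "finite U \<Longrightarrow> finite (partitions_into U k)"
  using finitely_many_partition_on by (rule finite_subset[rotated]) auto

lemma partitions_into_empty: "partitions_into {} k = (if k = 0 then {{}} else {})"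
  by (auto simp: partition_on_empty)

lemma partitions_into_0: "finite U \<Longrightarrow> U \<noteq> {} \<Longrightarrow> partitions_into U 0 = {}"
  by (auto simp: partition_on_def dest: finite_elements)

lemma sum_partitions_into_upto_card:
  assumes U: "finite U"
  shows "(\<Sum>k=0..card U. \<Sum>\<pi>\<in>partitions_into U k. F \<pi>) = (\<Sum>\<pi> | partition_on U \<pi>. F \<pi>)"
proof -
  have "card ` {\<pi>. partition_on U \<pi>} \<subseteq> {0..card U}"
    using card_partition_less[OF U] card_image_le[OF U, of "\<lambda>u. {u}"] by fastforce
  then show ?thesis
    using sum.group[OF finitely_many_partition_on[OF U] finite_atLeastAtMost, of card 0 "card U" F]
    by (simp add: conj_commute)
qed

lemma partition_on_insert_block:
  assumes "u \<in> C" "C \<subseteq> U" "partition_on (U - C) \<pi>"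
  shows "partition_on U (insert C \<pi>)" "C \<notin> \<pi>" "blk (insert C \<pi>) u = C"
proof -
  have "disjnt C (\<Union>\<pi>)"
    using partition_onD1[OF assms(3)] by (auto simp: disjnt_def)
  then show "partition_on U (insert C \<pi>)"
    using partition_on_insert[of C \<pi> U] assms by auto
  show "C \<notin> \<pi>"
    using assms partition_on_block_subset[OF assms(3)] by blast
  then show "blk (insert C \<pi>) u = C"
    using assms blk_eqI \<open>partition_on U (insert C \<pi>)\<close> by blast
qed

lemma partition_on_remove_block:
  assumes \<pi>: "partition_on U \<pi>" and u: "u \<in> U"
  shows "blk \<pi> u \<in> \<pi>" "u \<in> blk \<pi> u" "partition_on (U - blk \<pi> u) (\<pi> - {blk \<pi> u})"
proof -
  obtain C where C: "C \<in> \<pi>" "u \<in> C"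
    using partition_onD1[OF \<pi>] u by blast
  have "disjnt C (\<Union>(\<pi> - {C}))"
    using \<pi> C(1) by (auto simp: partition_on_def disjoint_def disjnt_def)
  moreover have "partition_on U (insert C (\<pi> - {C}))"
    using \<pi> C(1) by (simp add: insert_absorb)
  ultimately have "partition_on (U - C) (\<pi> - {C})"
    using partition_on_insert by blast
  then show "blk \<pi> u \<in> \<pi>" "u \<in> blk \<pi> u" "partition_on (U - blk \<pi> u) (\<pi> - {blk \<pi> u})"
    using blk_eqI[OF \<pi> C] C by simp_all
qed

lemma bij_betw_insert_block:
  assumes U: "finite U" and u: "u \<in> U"
  shows "bij_betw (\<lambda>(C, \<pi>'). insert C \<pi>')
     (SIGMA C:{C. u \<in> C \<and> C \<subseteq> U}. partitions_into (U - C) k) (partitions_into U (Suc k))"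
    (is "bij_betw ?f ?A ?B")
proof (rule bij_betw_byWitness[where f' = "\<lambda>\<pi>. (blk \<pi> u, \<pi> - {blk \<pi> u})"])
  show "\<forall>x\<in>?A. (blk (?f x) u, ?f x - {blk (?f x) u}) = x"
    using partition_on_insert_block by auto
  show "?f ` ?A \<subseteq> ?B"
  proof (rule image_subsetI)
    fix x
    assume "x \<in> ?A"
    then obtain C \<pi>' where x: "x = (C, \<pi>')" "u \<in> C" "C \<subseteq> U" and \<pi>': "partition_on (U - C) \<pi>'" "card \<pi>' = k"
      by auto
    have "finite \<pi>'"
      using finite_elements[OF _ \<pi>'(1)] U by simp
    then show "?f x \<in> ?B"
      using partition_on_insert_block[OF x(2,3) \<pi>'(1)] \<pi>'(2) by (simp add: x(1))
  qed
  show "\<forall>\<pi>\<in>?B. ?f (blk \<pi> u, \<pi> - {blk \<pi> u}) = \<pi>"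
    using partition_on_remove_block(1)[OF _ u] by (auto simp: insert_absorb)
  show "(\<lambda>\<pi>. (blk \<pi> u, \<pi> - {blk \<pi> u})) ` ?B \<subseteq> ?A"
  proof (rule image_subsetI)
    fix \<pi>
    assume \<pi>: "\<pi> \<in> ?B"
    then have "finite \<pi>" "blk \<pi> u \<subseteq> U"
      using finite_elements[OF U] partition_on_remove_block(1)[OF _ u] partition_on_block_subset[of U \<pi>]
      by simp_all
    then show "(blk \<pi> u, \<pi> - {blk \<pi> u}) \<in> ?A"
      using partition_on_remove_block[OF _ u] \<pi> by simp
  qed
qed

lemma card_subsets_containing:
  assumes U: "finite U" and u: "u \<in> U"
  shows "card {C. u \<in> C \<and> C \<subseteq> U \<and> card C = Suc i} = (card U - 1) choose i"
proof -
  have "bij_betw (insert u) {D. D \<subseteq> U - {u} \<and> card D = i} {C. u \<in> C \<and> C \<subseteq> U \<and> card C = Suc i}"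
  proof (rule bij_betw_byWitness[where f' = "\<lambda>C. C - {u}"], safe)
    fix D
    assume "D \<subseteq> U - {u}"
    then show "card (insert u D) = Suc (card D)"
      using U by (meson DiffD2 card_insert_disjoint finite_Diff finite_subset singletonI subsetD)
  next
    fix C
    assume "u \<in> C" "C \<subseteq> U" "card C = Suc i"
    then show "card (C - {u}) = i"
      by (simp add: U finite_subset)
  qed (use u in auto)
  then have "card {C. u \<in> C \<and> C \<subseteq> U \<and> card C = Suc i} = card {D. D \<subseteq> U - {u} \<and> card D = i}"
    by (simp add: bij_betw_same_card)
  also have "\<dots> = card (U - {u}) choose i"
    using n_subsets[of "U - {u}" i] U by simp
  finally show ?thesis
    using u U by simp
qed

lemma sum_subsets_containing_by_card:
  assumes U: "finite U" and u: "u \<in> U"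
  shows "(\<Sum>C | u \<in> C \<and> C \<subseteq> U. F (card C)) =
         (\<Sum>i=0..card U - 1. of_nat ((card U - 1) choose i) * (F (Suc i) :: 'a::comm_semiring_1))"
proof -
  let ?Cs = "{C. u \<in> C \<and> C \<subseteq> U}"
  have fin: "finite ?Cs"
    by (rule finite_subset[of _ "Pow U"]) (use U in auto)
  have img: "card ` ?Cs \<subseteq> Suc ` {0..card U - 1}"
  proof (rule image_subsetI)
    fix C
    assume that: "C \<in> ?Cs"
    have "1 \<le> card C"
      using that U by (metis One_nat_def Suc_leI card_gt_0_iff empty_iff finite_subset mem_Collect_eq)
    moreover have "card C \<le> card U"
      using that card_mono[OF U] by blast
    ultimately show "card C \<in> Suc ` {0..card U - 1}"
      by (auto intro!: image_eqI[of _ _ "card C - 1"])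
  qed
  have "(\<Sum>C\<in>?Cs. F (card C)) = (\<Sum>j\<in>Suc ` {0..card U - 1}. \<Sum>C | C \<in> ?Cs \<and> card C = j. F (card C))"
    using sum.group[OF fin _ img, of "\<lambda>C. F (card C)"] by simp
  also have "\<dots> = (\<Sum>i=0..card U - 1. \<Sum>C | C \<in> ?Cs \<and> card C = Suc i. F (card C))"
    by (rule sum.reindex[of Suc, unfolded comp_def]) simp
  also have "\<dots> = (\<Sum>i=0..card U - 1. of_nat ((card U - 1) choose i) * F (Suc i))"
  proof (rule sum.cong[OF refl])
    fix i
    have "(\<Sum>C | C \<in> ?Cs \<and> card C = Suc i. F (card C)) = (\<Sum>C | C \<in> ?Cs \<and> card C = Suc i. F (Suc i))"
      by (rule sum.cong) auto
    also have "{C. C \<in> ?Cs \<and> card C = Suc i} = {C. u \<in> C \<and> C \<subseteq> U \<and> card C = Suc i}"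
      by auto
    finally show "(\<Sum>C | C \<in> ?Cs \<and> card C = Suc i. F (card C)) = of_nat ((card U - 1) choose i) * F (Suc i)"
      using card_subsets_containing[OF U u, of i] by simp
  qed
  finally show ?thesis
    by simp
qed

section \<open>Set operads\<close>

lemma compM_iff:
  "((\<pi>, f), m') \<in> compM M U \<longleftrightarrow>
     partition_on U \<pi> \<and> f \<in> extensional \<pi> \<and> (\<forall>B\<in>\<pi>. f B \<in> M B) \<and> m' \<in> M (Min ` \<pi>)"
  by (simp add: compM_def assemblies_def)

lemma compM_eq_Sigma:
  "compM M U = (SIGMA a:(SIGMA \<pi>:{\<pi>. partition_on U \<pi>}. PiE \<pi> M). M (Min ` fst a))"
  by (auto simp: compM_def assemblies_def PiE_def Pi_def)

locale set_operad_on =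
  fixes M :: "nat set \<Rightarrow> 'm set" and rl :: "(nat \<Rightarrow> nat) \<Rightarrow> nat set \<Rightarrow> 'm \<Rightarrow> 'm"
    and \<eta> :: "nat set set \<times> (nat set \<Rightarrow> 'm) \<Rightarrow> 'm \<Rightarrow> 'm"
  assumes operad: "set_operad M rl \<eta>"

sublocale set_operad_on \<subseteq> species_on M rl
  using operad unfolding set_operad_def by unfold_locales (elim conjE)

context set_operad_on
begin

lemma no_structures_on_empty: "M {} = {}"
  using operad unfolding set_operad_def by (elim conjE)

lemma structures_on_singleton: "M {u} = {the_elem (M {u})}"
proof -
  have "\<forall>u. \<exists>e. M {u} = {e}"
    using operad unfolding set_operad_def by (elim conjE) assumption
  then obtain e where "M {u} = {e}"
    by blast
  then show ?thesis
    by simp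
qed

lemma eta_in [rule_format]: "\<forall>U a m'. finite U \<longrightarrow> (a, m') \<in> compM M U \<longrightarrow> \<eta> a m' \<in> M U"
  using operad unfolding set_operad_def by (elim conjE) assumption

lemma eta_transport [rule_format]:
  "\<forall>\<sigma> U V \<pi> f m'. finite U \<longrightarrow> bij_betw \<sigma> U V \<longrightarrow> ((\<pi>, f), m') \<in> compM M U \<longrightarrow>
     rl \<sigma> U (\<eta> (\<pi>, f) m') =
     \<eta> ((`) \<sigma> ` \<pi>, restrict (\<lambda>B'. rl \<sigma> (inv_into U \<sigma> ` B') (f (inv_into U \<sigma> ` B'))) ((`) \<sigma> ` \<pi>))
       (rl (\<lambda>x. Min (\<sigma> ` blk \<pi> x)) (Min ` \<pi>) m')"
  using operad unfolding set_operad_def by (elim conjE) assumption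

lemma eta_left_unit [rule_format]:
  "\<forall>U m. finite U \<longrightarrow> U \<noteq> {} \<longrightarrow> m \<in> M U \<longrightarrow>
     \<eta> (singletons U, restrict (\<lambda>B. the_elem (M B)) (singletons U)) m = m"
  using operad unfolding set_operad_def by (elim conjE) assumption

lemma eta_right_unit [rule_format]:
  "\<forall>U m. finite U \<longrightarrow> U \<noteq> {} \<longrightarrow> m \<in> M U \<longrightarrow>
     \<eta> ({U}, restrict (\<lambda>_. m) {U}) (the_elem (M {Min U})) = m"
  using operad unfolding set_operad_def by (elim conjE) assumption

lemma labels_nonempty: "m \<in> M U \<Longrightarrow> U \<noteq> {}"
  using no_structures_on_empty by auto

lemma finite_compM:
  assumes "finite U"
  shows "finite (compM M U)"
  unfolding compM_eq_Sigma using finite_elements[OF assms] partition_on_block_finite[OF assms]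
  by (intro finite_SigmaI finite_PiE finitely_many_partition_on[OF assms] finite_structures) auto

lemma tp_singleton: "e \<in> M {u} \<Longrightarrow> tp rl {u} e = dot M rl"
proof -
  assume e: "e \<in> M {u}"
  have \<sigma>: "bij_betw (\<lambda>x. 1::nat) {u} {1}"
    by (simp add: bij_betw_def)
  have "rl (\<lambda>x. 1) {u} e = the_elem (M {1})"
    using transport_in[OF _ \<sigma> e] structures_on_singleton[of 1] by auto
  then show ?thesis
    using tp_transport[OF _ \<sigma> e] by (simp add: dot_def)
qed

lemma tp_neq_dot:
  assumes "finite U" "m \<in> M U" "card U \<noteq> 1"
  shows "tp rl U m \<noteq> dot M rl"
  using card_eq_if_tp_eq[OF assms(1,2), of "{1}" "the_elem (M {1})"] structures_on_singleton[of 1] assms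
  by (auto simp: dot_def)

lemma type_size_ge_2:
  assumes "\<alpha> \<in> types M rl" "\<alpha> \<noteq> dot M rl"
  shows "2 \<le> type_size \<alpha>"
proof -
  obtain U m where U: "finite U" "m \<in> M U" "\<alpha> = tp rl U m"
    using assms(1) by (rule typesE)
  have "card U \<noteq> 0"
    using U labels_nonempty by simp
  moreover have "card U \<noteq> 1"
    using U assms(2) tp_singleton by (metis card_1_singletonE)
  ultimately show ?thesis
    using type_rep_tp(5)[OF U(1,2)] U(3) by simp
qed

end

text \<open>The action of a relabelling \<open>\<sigma>\<close> on \<open>M(M)[U]\<close>, read off from the naturality axiom of \<open>\<eta>\<close>.\<close>

definition comp_transport :: "((nat \<Rightarrow> nat) \<Rightarrow> nat set \<Rightarrow> 'm \<Rightarrow> 'm) \<Rightarrow> (nat \<Rightarrow> nat) \<Rightarrow> nat set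
   \<Rightarrow> (nat set set \<times> (nat set \<Rightarrow> 'm)) \<times> 'm \<Rightarrow> (nat set set \<times> (nat set \<Rightarrow> 'm)) \<times> 'm" where
  "comp_transport rl \<sigma> U x = (case x of ((\<pi>, f), m') \<Rightarrow>
     (((`) \<sigma> ` \<pi>, restrict (\<lambda>B'. rl \<sigma> (inv_into U \<sigma> ` B') (f (inv_into U \<sigma> ` B'))) ((`) \<sigma> ` \<pi>)),
      rl (\<lambda>x. Min (\<sigma> ` blk \<pi> x)) (Min ` \<pi>) m'))"

lemma comp_transport_eq:
  "comp_transport rl \<sigma> U ((\<pi>, f), m') =
     (((`) \<sigma> ` \<pi>, restrict (\<lambda>B'. rl \<sigma> (inv_into U \<sigma> ` B') (f (inv_into U \<sigma> ` B'))) ((`) \<sigma> ` \<pi>)),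
      rl (\<lambda>x. Min (\<sigma> ` blk \<pi> x)) (Min ` \<pi>) m')"
  by (simp add: comp_transport_def)

lemma comp_transport_block:
  assumes "bij_betw \<sigma> U V" "partition_on U \<pi>" "B \<in> \<pi>"
  shows "restrict (\<lambda>B'. rl \<sigma> (inv_into U \<sigma> ` B') (f (inv_into U \<sigma> ` B'))) ((`) \<sigma> ` \<pi>) (\<sigma> ` B) =
    rl \<sigma> B (f B)"
proof -
  have "inv_into U \<sigma> ` \<sigma> ` B = B"
    using assms partition_on_block_subset[OF assms(2,3)]
    by (auto simp: bij_betw_def image_image inv_into_f_f subset_iff)
  then show ?thesis
    using assms(3) by simp
qed

lemma bij_betw_Min_blocks:
  assumes U: "finite U" and \<sigma>: "bij_betw \<sigma> U V" and \<pi>: "partition_on U \<pi>"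
  shows "bij_betw (\<lambda>x. Min (\<sigma> ` blk \<pi> x)) (Min ` \<pi>) (Min ` ((`) \<sigma> ` \<pi>))"
proof -
  have V: "finite V"
    using \<sigma> U bij_betw_finite by blast
  have \<sigma>\<pi>: "partition_on V ((`) \<sigma> ` \<pi>)"
    by (rule partition_on_image_bij[OF \<sigma> \<pi>])
  have Min_blk: "Min (\<sigma> ` blk \<pi> (Min B)) = Min (\<sigma> ` B)" if "B \<in> \<pi>" for B
    using blk_Min[OF U \<pi> that] by simp
  have "inj_on (\<lambda>B. Min (\<sigma> ` B)) \<pi>"
    using inj_on_Min_partition[OF V \<sigma>\<pi>] inj_on_image_blocks[OF bij_betw_imp_inj_on[OF \<sigma>] \<pi>]
    by (auto simp: inj_on_def)
  then have "inj_on (\<lambda>x. Min (\<sigma> ` blk \<pi> x)) (Min ` \<pi>)"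
    using Min_blk by (auto simp: inj_on_def)
  moreover have "(\<lambda>x. Min (\<sigma> ` blk \<pi> x)) ` Min ` \<pi> = Min ` (`) \<sigma> ` \<pi>"
    using Min_blk by (force simp: image_image intro: image_cong)
  ultimately show ?thesis
    by (simp add: bij_betw_def)
qed

context set_operad_on
begin

lemma comp_transport_in_compM:
  assumes U: "finite U" and \<sigma>: "bij_betw \<sigma> U V" and x: "((\<pi>, f), m') \<in> compM M U"
  shows "comp_transport rl \<sigma> U ((\<pi>, f), m') \<in> compM M V"
proof -
  have \<pi>: "partition_on U \<pi>" and f: "\<forall>B\<in>\<pi>. f B \<in> M B" and m': "m' \<in> M (Min ` \<pi>)"
    using x by (auto simp: compM_iff)
  have "rl \<sigma> B (f B) \<in> M (\<sigma> ` B)" if "B \<in> \<pi>" for B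
    using transport_in[OF partition_on_block_finite[OF U \<pi> that]
        bij_betw_subset[OF \<sigma> partition_on_block_subset[OF \<pi> that]]] f that by blast
  moreover have "rl (\<lambda>x. Min (\<sigma> ` blk \<pi> x)) (Min ` \<pi>) m' \<in> M (Min ` ((`) \<sigma> ` \<pi>))"
    using transport_in[OF _ bij_betw_Min_blocks[OF U \<sigma> \<pi>] m'] finite_elements[OF U \<pi>] by simp
  ultimately show ?thesis
    unfolding comp_transport_eq compM_iff
    using partition_on_image_bij[OF \<sigma> \<pi>] comp_transport_block[OF \<sigma> \<pi>, where rl=rl and f=f] by auto
qed

lemma comp_transport_eta:
  "finite U \<Longrightarrow> bij_betw \<sigma> U V \<Longrightarrow> ((\<pi>, f), m') \<in> compM M U \<Longrightarrow>
     case_prod \<eta> (comp_transport rl \<sigma> U ((\<pi>, f), m')) = rl \<sigma> U (\<eta> (\<pi>, f) m')"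
  unfolding comp_transport_eq using eta_transport by simp

lemma inj_on_comp_transport:
  assumes U: "finite U" and \<sigma>: "bij_betw \<sigma> U V"
  shows "inj_on (comp_transport rl \<sigma> U) (compM M U)"
proof (rule inj_onI, clarify)
  fix \<pi>1 f1 m1 \<pi>2 f2 m2
  assume x: "((\<pi>1, f1), m1) \<in> compM M U" and y: "((\<pi>2, f2), m2) \<in> compM M U"
    and eq: "comp_transport rl \<sigma> U ((\<pi>1, f1), m1) = comp_transport rl \<sigma> U ((\<pi>2, f2), m2)"
  have \<pi>1: "partition_on U \<pi>1" and f1: "f1 \<in> extensional \<pi>1" "\<forall>B\<in>\<pi>1. f1 B \<in> M B"
    and m1: "m1 \<in> M (Min ` \<pi>1)"
    using x by (auto simp: compM_iff)
  have \<pi>2: "partition_on U \<pi>2" and f2: "f2 \<in> extensional \<pi>2" "\<forall>B\<in>\<pi>2. f2 B \<in> M B"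
    and m2: "m2 \<in> M (Min ` \<pi>2)"
    using y by (auto simp: compM_iff)
  have "\<pi>1 \<subseteq> Pow U" "\<pi>2 \<subseteq> Pow U"
    using partition_on_block_subset \<pi>1 \<pi>2 by blast+
  then have \<pi>_eq: "\<pi>1 = \<pi>2"
    using eq inj_on_image_Pow[OF bij_betw_imp_inj_on[OF \<sigma>]] by (simp add: comp_transport_eq inj_on_image_eq_iff)
  have "f1 = f2"
  proof (rule extensionalityI[OF f1(1) f2(1)[folded \<pi>_eq]])
    fix B
    assume B: "B \<in> \<pi>1"
    have "rl \<sigma> B (f1 B) = rl \<sigma> B (f2 B)"
      using eq \<pi>_eq comp_transport_block[OF \<sigma> \<pi>1 B, where rl=rl and f=f1]
        comp_transport_block[OF \<sigma> \<pi>1 B, where rl=rl and f=f2]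
      by (simp add: comp_transport_eq)
    moreover have "f1 B \<in> M B" "f2 B \<in> M B"
      using f1(2) f2(2) B \<pi>_eq by auto
    ultimately show "f1 B = f2 B"
      using transport_inject[OF partition_on_block_finite[OF U \<pi>1 B]
          bij_betw_subset[OF \<sigma> partition_on_block_subset[OF \<pi>1 B]]] by blast
  qed
  moreover have "m1 = m2"
  proof (rule transport_inject[OF finite_imageI[OF finite_elements[OF U \<pi>1]] bij_betw_Min_blocks[OF U \<sigma> \<pi>1] m1])
    show "m2 \<in> M (Min ` \<pi>1)"
      using m2 \<pi>_eq by simp
    show "rl (\<lambda>x. Min (\<sigma> ` blk \<pi>1 x)) (Min ` \<pi>1) m1 = rl (\<lambda>x. Min (\<sigma> ` blk \<pi>1 x)) (Min ` \<pi>1) m2"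
      using eq \<pi>_eq by (simp add: comp_transport_eq)
  qed
  ultimately show "(\<pi>1, f1) = (\<pi>2, f2) \<and> m1 = m2"
    using \<pi>_eq by simp
qed

end

definition eta_fibre :: "(nat set \<Rightarrow> 'm set) \<Rightarrow> (nat set set \<times> (nat set \<Rightarrow> 'm) \<Rightarrow> 'm \<Rightarrow> 'm)
   \<Rightarrow> nat set \<Rightarrow> 'm \<Rightarrow> ((nat set set \<times> (nat set \<Rightarrow> 'm)) \<times> 'm) set" where
  "eta_fibre M \<eta> U m = {x \<in> compM M U. case_prod \<eta> x = m}"

definition comp_weight :: "((nat \<Rightarrow> nat) \<Rightarrow> nat set \<Rightarrow> 'm \<Rightarrow> 'm) \<Rightarrow> ((nat set \<times> 'm) set \<Rightarrow> 'a::comm_semiring_1)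
   \<Rightarrow> ((nat set \<times> 'm) set \<Rightarrow> 'a) \<Rightarrow> (nat set set \<times> (nat set \<Rightarrow> 'm)) \<times> 'm \<Rightarrow> 'a" where
  "comp_weight rl g h x = (case x of ((\<pi>, f), m') \<Rightarrow> (\<Prod>B\<in>\<pi>. g (tp rl B (f B))) * h (tp rl (Min ` \<pi>) m'))"

lemma comp_weight_eq [simp]:
  "comp_weight rl g h ((\<pi>, f), m') = (\<Prod>B\<in>\<pi>. g (tp rl B (f B))) * h (tp rl (Min ` \<pi>) m')"
  by (simp add: comp_weight_def)

lemma coprod_str_eq_sum_comp_weight:
  "coprod_str M rl \<eta> U m =
     (\<Sum>x\<in>eta_fibre M \<eta> U m. comp_weight rl (\<lambda>\<beta>. tvar2 M rl \<beta> True) (\<lambda>\<beta>. tvar2 M rl \<beta> False) x)"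
proof -
  have "{((\<pi>, f), m') \<in> compM M U. \<eta> (\<pi>, f) m' = m} = eta_fibre M \<eta> U m"
    unfolding eta_fibre_def by auto
  then show ?thesis
    unfolding coprod_str_def by (auto intro!: sum.cong)
qed

context set_operad_on
begin

lemma finite_eta_fibre: "finite U \<Longrightarrow> finite (eta_fibre M \<eta> U m)"
  unfolding eta_fibre_def using finite_compM by simp

lemma comp_transport_eta_fibre:
  assumes U: "finite U" and \<sigma>: "bij_betw \<sigma> U V"
  shows "comp_transport rl \<sigma> U ` eta_fibre M \<eta> U m \<subseteq> eta_fibre M \<eta> V (rl \<sigma> U m)"
proof (rule image_subsetI)
  fix x
  assume x: "x \<in> eta_fibre M \<eta> U m"
  obtain \<pi> f m' where x_eq: "x = ((\<pi>, f), m')"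
    by (metis prod.exhaust)
  show "comp_transport rl \<sigma> U x \<in> eta_fibre M \<eta> V (rl \<sigma> U m)"
    using x comp_transport_in_compM[OF U \<sigma>, of \<pi> f m'] comp_transport_eta[OF U \<sigma>, of \<pi> f m']
    by (simp add: eta_fibre_def x_eq)
qed

lemma bij_betw_comp_transport_eta_fibre:
  assumes U: "finite U" and \<sigma>: "bij_betw \<sigma> U V" and m: "m \<in> M U"
  shows "bij_betw (comp_transport rl \<sigma> U) (eta_fibre M \<eta> U m) (eta_fibre M \<eta> V (rl \<sigma> U m))"
proof -
  have V: "finite V"
    using \<sigma> U bij_betw_finite by blast
  have \<sigma>': "bij_betw (inv_into U \<sigma>) V U"
    using \<sigma> by (rule bij_betw_inv_into)
  have inj: "inj_on (comp_transport rl \<sigma> U) (eta_fibre M \<eta> U m)"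
    using inj_on_comp_transport[OF U \<sigma>] by (rule inj_on_subset) (auto simp: eta_fibre_def)
  have "card (eta_fibre M \<eta> U m) = card (eta_fibre M \<eta> V (rl \<sigma> U m))"
  proof (rule card_bij_eq[OF inj comp_transport_eta_fibre[OF U \<sigma>]])
    show "inj_on (comp_transport rl (inv_into U \<sigma>) V) (eta_fibre M \<eta> V (rl \<sigma> U m))"
      using inj_on_comp_transport[OF V \<sigma>'] by (rule inj_on_subset) (auto simp: eta_fibre_def)
    show "comp_transport rl (inv_into U \<sigma>) V ` eta_fibre M \<eta> V (rl \<sigma> U m) \<subseteq> eta_fibre M \<eta> U m"
      using comp_transport_eta_fibre[OF V \<sigma>', of "rl \<sigma> U m"] transport_inv[OF U \<sigma> m] by simp
  qed (use finite_eta_fibre U V in auto)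
  then show ?thesis
    using inj comp_transport_eta_fibre[OF U \<sigma>] finite_eta_fibre[OF V]
    by (metis bij_betw_def card_image card_subset_eq)
qed

lemma comp_weight_comp_transport:
  assumes U: "finite U" and \<sigma>: "bij_betw \<sigma> U V" and x: "x \<in> compM M U"
  shows "comp_weight rl g h (comp_transport rl \<sigma> U x) = comp_weight rl g h x"
proof -
  obtain \<pi> f m' where x_eq: "x = ((\<pi>, f), m')"
    by (metis prod.exhaust)
  have \<pi>: "partition_on U \<pi>" and f: "\<forall>B\<in>\<pi>. f B \<in> M B" and m': "m' \<in> M (Min ` \<pi>)"
    using x by (auto simp: compM_iff x_eq)
  let ?f' = "restrict (\<lambda>B'. rl \<sigma> (inv_into U \<sigma> ` B') (f (inv_into U \<sigma> ` B'))) ((`) \<sigma> ` \<pi>)"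
  have "(\<Prod>B'\<in>(`) \<sigma> ` \<pi>. g (tp rl B' (?f' B'))) = (\<Prod>B\<in>\<pi>. g (tp rl (\<sigma> ` B) (?f' (\<sigma> ` B))))"
    using prod.reindex[OF inj_on_image_blocks[OF bij_betw_imp_inj_on[OF \<sigma>] \<pi>]] by simp
  also have "\<dots> = (\<Prod>B\<in>\<pi>. g (tp rl B (f B)))"
  proof (rule prod.cong[OF refl])
    fix B
    assume B: "B \<in> \<pi>"
    show "g (tp rl (\<sigma> ` B) (?f' (\<sigma> ` B))) = g (tp rl B (f B))"
      using comp_transport_block[OF \<sigma> \<pi> B, where rl=rl and f=f] f B
        tp_transport[OF partition_on_block_finite[OF U \<pi> B]
          bij_betw_subset[OF \<sigma> partition_on_block_subset[OF \<pi> B]]]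
      by simp
  qed
  moreover have "tp rl (Min ` ((`) \<sigma> ` \<pi>)) (rl (\<lambda>x. Min (\<sigma> ` blk \<pi> x)) (Min ` \<pi>) m') = tp rl (Min ` \<pi>) m'"
    using tp_transport[OF _ bij_betw_Min_blocks[OF U \<sigma> \<pi>] m'] finite_elements[OF U \<pi>] by simp
  ultimately show ?thesis
    by (simp add: x_eq comp_transport_eq)
qed

lemma sum_comp_weight_eta_fibre_transport:
  assumes U: "finite U" and \<sigma>: "bij_betw \<sigma> U V" and m: "m \<in> M U"
  shows "(\<Sum>x\<in>eta_fibre M \<eta> V (rl \<sigma> U m). comp_weight rl g h x) = (\<Sum>x\<in>eta_fibre M \<eta> U m. comp_weight rl g h x)"
proof -
  have "(\<Sum>x\<in>eta_fibre M \<eta> V (rl \<sigma> U m). comp_weight rl g h x) =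
      (\<Sum>x\<in>eta_fibre M \<eta> U m. comp_weight rl g h (comp_transport rl \<sigma> U x))"
    using sum.reindex_bij_betw[OF bij_betw_comp_transport_eta_fibre[OF U \<sigma> m], of "comp_weight rl g h"] ..
  also have "\<dots> = (\<Sum>x\<in>eta_fibre M \<eta> U m. comp_weight rl g h x)"
    by (rule sum.cong[OF refl]) (simp add: comp_weight_comp_transport[OF U \<sigma>] eta_fibre_def)
  finally show ?thesis .
qed

lemma coprod_str_tp_invariant:
  assumes "finite U" "m \<in> M U" "(V, m') \<in> tp rl U m"
  shows "coprod_str M rl \<eta> V m' = coprod_str M rl \<eta> U m"
proof -
  obtain \<sigma> where "m' = rl \<sigma> U m" "bij_betw \<sigma> U V"
    using assms(3) unfolding tp_def by blast
  then show ?thesis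
    unfolding coprod_str_eq_sum_comp_weight using sum_comp_weight_eta_fibre_transport assms(1,2) by blast
qed

end

definition singletons_comp :: "(nat set \<Rightarrow> 'm set) \<Rightarrow> nat set \<Rightarrow> 'm \<Rightarrow> (nat set set \<times> (nat set \<Rightarrow> 'm)) \<times> 'm" where
  "singletons_comp M U m = ((singletons U, restrict (\<lambda>B. the_elem (M B)) (singletons U)), m)"

definition whole_block_comp :: "(nat set \<Rightarrow> 'm set) \<Rightarrow> nat set \<Rightarrow> 'm \<Rightarrow> (nat set set \<times> (nat set \<Rightarrow> 'm)) \<times> 'm" where
  "whole_block_comp M U m = (({U}, restrict (\<lambda>_. m) {U}), the_elem (M {Min U}))"

definition proper_eta_fibre :: "(nat set \<Rightarrow> 'm set) \<Rightarrow> (nat set set \<times> (nat set \<Rightarrow> 'm) \<Rightarrow> 'm \<Rightarrow> 'm)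
   \<Rightarrow> nat set \<Rightarrow> 'm \<Rightarrow> ((nat set set \<times> (nat set \<Rightarrow> 'm)) \<times> 'm) set" where
  "proper_eta_fibre M \<eta> U m = eta_fibre M \<eta> U m - {singletons_comp M U m, whole_block_comp M U m}"

lemma singletons_comp_neq_whole_block_comp:
  assumes "finite U" "2 \<le> card U"
  shows "singletons_comp M U m \<noteq> whole_block_comp M U m'"
proof
  assume "singletons_comp M U m = whole_block_comp M U m'"
  then have "card (singletons U) = 1"
    by (simp add: singletons_comp_def whole_block_comp_def)
  then show False
    using assms by (simp add: card_image)
qed

context set_operad_on
begin

lemma the_elem_in_structures_on_singleton: "the_elem (M {u}) \<in> M {u}"
  using structures_on_singleton by (metis singletonI)

lemma tp_the_elem_singleton: "tp rl {u} (the_elem (M {u})) = dot M rl"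
  using tp_singleton the_elem_in_structures_on_singleton by blast

lemma singletons_comp_in_eta_fibre:
  assumes "finite U" "m \<in> M U"
  shows "singletons_comp M U m \<in> eta_fibre M \<eta> U m"
  using assms eta_left_unit[OF assms(1) labels_nonempty[OF assms(2)] assms(2)] structures_on_singleton
  by (auto simp: singletons_comp_def eta_fibre_def compM_iff partition_on_singletons image_image)

lemma whole_block_comp_in_eta_fibre:
  assumes "finite U" "m \<in> M U"
  shows "whole_block_comp M U m \<in> eta_fibre M \<eta> U m"
  using assms eta_right_unit[OF assms(1) labels_nonempty[OF assms(2)] assms(2)] structures_on_singleton
  by (auto simp: whole_block_comp_def eta_fibre_def compM_iff partition_on_space labels_nonempty)

lemma eta_fibre_whole_block:
  assumes U: "finite U" and x: "(({U}, f), m') \<in> eta_fibre M \<eta> U m"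
  shows "(({U}, f), m') = whole_block_comp M U m"
proof -
  have f: "f = restrict (\<lambda>_. f U) {U}"
    using x by (intro extensionalityI[of _ "{U}"]) (auto simp: eta_fibre_def compM_iff)
  have m': "m' = the_elem (M {Min U})"
    using x structures_on_singleton[of "Min U"] by (auto simp: eta_fibre_def compM_iff)
  have "U \<noteq> {}" "f U \<in> M U" "m = \<eta> ({U}, f) m'"
    using x by (auto simp: eta_fibre_def compM_iff dest: partition_onD3)
  then have "f U = m"
    using eta_right_unit[OF U, of "f U"] f m' by simp
  then show ?thesis
    using f m' by (simp add: whole_block_comp_def)
qed

lemma proper_eta_fibre_blocks_smaller:
  assumes U: "finite U" and x: "((\<pi>, f), m') \<in> proper_eta_fibre M \<eta> U m" and B: "B \<in> \<pi>"
  shows "card B < card U"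
proof -
  have fibre: "((\<pi>, f), m') \<in> eta_fibre M \<eta> U m" "((\<pi>, f), m') \<noteq> whole_block_comp M U m"
    using x by (auto simp: proper_eta_fibre_def)
  then have "\<pi> \<noteq> {U}"
    using eta_fibre_whole_block[OF U] by blast
  moreover have "partition_on U \<pi>"
    using fibre by (simp add: eta_fibre_def compM_iff)
  ultimately show ?thesis
    using card_block_less[OF U _ _ B] by blast
qed

lemma sum_comp_weight_eta_fibre_split:
  assumes U: "finite U" and m: "m \<in> M U" and "2 \<le> card U" and g_dot: "g (dot M rl) = 1"
  shows "(\<Sum>x\<in>eta_fibre M \<eta> U m. comp_weight rl g h x) =
    h (tp rl U m) + g (tp rl U m) * h (dot M rl) + (\<Sum>x\<in>proper_eta_fibre M \<eta> U m. comp_weight rl g h x)"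
proof -
  let ?P = "proper_eta_fibre M \<eta> U m"
  have fibre: "eta_fibre M \<eta> U m = insert (singletons_comp M U m) (insert (whole_block_comp M U m) ?P)"
    using singletons_comp_in_eta_fibre[OF U m] whole_block_comp_in_eta_fibre[OF U m]
    by (auto simp: proper_eta_fibre_def)
  have "singletons_comp M U m \<notin> insert (whole_block_comp M U m) ?P" "whole_block_comp M U m \<notin> ?P"
    using singletons_comp_neq_whole_block_comp[OF U assms(3), of M m m] by (auto simp: proper_eta_fibre_def)
  moreover have "finite ?P"
    using finite_eta_fibre[OF U] by (simp add: proper_eta_fibre_def)
  moreover have "(\<Prod>B\<in>singletons U. g (tp rl B (the_elem (M B)))) = 1"
    using g_dot tp_the_elem_singleton by (intro prod.neutral) auto
  then have "comp_weight rl g h (singletons_comp M U m) = h (tp rl U m)"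
    by (simp add: singletons_comp_def image_image)
  moreover have "comp_weight rl g h (whole_block_comp M U m) = g (tp rl U m) * h (dot M rl)"
    by (simp add: whole_block_comp_def tp_the_elem_singleton)
  ultimately show ?thesis
    unfolding fibre by (simp add: add.assoc)
qed

lemma proper_eta_fibre_types:
  assumes U: "finite U" and x: "((\<pi>, f), m') \<in> proper_eta_fibre M \<eta> U m"
  shows "\<And>B. B \<in> \<pi> \<Longrightarrow> tp rl B (f B) \<in> types M rl \<and> type_size (tp rl B (f B)) < card U"
    and "tp rl (Min ` \<pi>) m' \<in> types M rl"
proof -
  have \<pi>: "partition_on U \<pi>" and f: "\<forall>B\<in>\<pi>. f B \<in> M B" and m': "m' \<in> M (Min ` \<pi>)"
    using x by (auto simp: proper_eta_fibre_def eta_fibre_def compM_iff)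
  show "tp rl B (f B) \<in> types M rl \<and> type_size (tp rl B (f B)) < card U" if B: "B \<in> \<pi>" for B
    using tp_in_types[OF partition_on_block_finite[OF U \<pi> B]] type_rep_tp(5)[OF partition_on_block_finite[OF U \<pi> B]]
      f B proper_eta_fibre_blocks_smaller[OF U x] by auto
  show "tp rl (Min ` \<pi>) m' \<in> types M rl"
    using tp_in_types[OF _ m'] finite_elements[OF U \<pi>] by simp
qed

end

section \<open>The algebra \<open>N\<^sub>M\<close> and its antipode\<close>

lemma NM_iff:
  "p \<in> NM M rl \<longleftrightarrow> (\<forall>mn\<in>Poly_Mapping.keys p. \<forall>\<alpha>\<in>Poly_Mapping.keys mn. \<alpha> \<in> types M rl \<and> \<alpha> \<noteq> dot M rl)"
  by (simp add: NM_def)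

lemma NM_0 [simp]: "0 \<in> NM M rl"
  by (simp add: NM_iff)

lemma NM_pconst [simp]: "pconst c \<in> NM M rl"
  by (simp add: NM_iff pconst_def)

lemma NM_1 [simp]: "1 \<in> NM M rl"
  by (simp add: NM_iff)

lemma NM_add: "p \<in> NM M rl \<Longrightarrow> q \<in> NM M rl \<Longrightarrow> p + q \<in> NM M rl"
  unfolding NM_iff using keys_add[of p q] by blast

lemma NM_uminus: "(p :: (_, 'k::ab_group_add) mpoly) \<in> NM M rl \<Longrightarrow> - p \<in> NM M rl"
  unfolding NM_iff by simp

lemma NM_mult:
  assumes "(p :: (_, 'k::comm_semiring_1) mpoly) \<in> NM M rl" "q \<in> NM M rl"
  shows "p * q \<in> NM M rl"
  unfolding NM_iff
proof (intro ballI)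
  fix mn \<alpha>
  assume "mn \<in> Poly_Mapping.keys (p * q)" and \<alpha>: "\<alpha> \<in> Poly_Mapping.keys mn"
  then obtain a b where "mn = a + b" "a \<in> Poly_Mapping.keys p" "b \<in> Poly_Mapping.keys q"
    using keys_mult[of p q] by blast
  moreover from this have "\<alpha> \<in> Poly_Mapping.keys a \<or> \<alpha> \<in> Poly_Mapping.keys b"
    using keys_add[of a b] \<alpha> by blast
  ultimately show "\<alpha> \<in> types M rl \<and> \<alpha> \<noteq> dot M rl"
    using assms unfolding NM_iff by blast
qed

lemma NM_sum: "(\<And>i. i \<in> A \<Longrightarrow> f i \<in> NM M rl) \<Longrightarrow> sum f A \<in> NM M rl"
  by (induction A rule: infinite_finite_induct) (auto intro: NM_add)

lemma NM_prod: "(\<And>i. i \<in> A \<Longrightarrow> (f i :: (_, 'k::comm_semiring_1) mpoly) \<in> NM M rl) \<Longrightarrow> prod f A \<in> NM M rl"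
  by (induction A rule: infinite_finite_induct) (auto intro: NM_mult)

lemma NM_power: "(p :: (_, 'k::comm_semiring_1) mpoly) \<in> NM M rl \<Longrightarrow> p ^ n \<in> NM M rl"
  by (induction n) (auto intro: NM_mult)

lemma NM_pvar: "\<alpha> \<in> types M rl \<Longrightarrow> \<alpha> \<noteq> dot M rl \<Longrightarrow> (pvar \<alpha> :: (_, 'k::zero_neq_one) mpoly) \<in> NM M rl"
  by (simp add: NM_iff pvar_def)

lemma NM_tvar: "\<alpha> \<in> types M rl \<Longrightarrow> (tvar M rl \<alpha> :: (_, 'k::comm_semiring_1) mpoly) \<in> NM M rl"
  by (simp add: tvar_def NM_pvar)

lemma NM_psubst:
  assumes "\<And>mn v. mn \<in> Poly_Mapping.keys p \<Longrightarrow> v \<in> Poly_Mapping.keys mn \<Longrightarrow> \<phi> v \<in> NM M rl"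
  shows "psubst \<phi> p \<in> NM M rl"
  unfolding peval_eq_sum_monom_eval monom_eval_def using assms
  by (intro NM_sum NM_mult NM_pconst NM_prod NM_power) auto

lemma NM_comp_weight:
  assumes "\<And>B. B \<in> \<pi> \<Longrightarrow> g (tp rl B (f B)) \<in> NM M rl" "tp rl (Min ` \<pi>) m' \<in> types M rl"
  shows "(comp_weight rl g (tvar M rl) ((\<pi>, f), m') :: (_, 'k::comm_semiring_1) mpoly) \<in> NM M rl"
  using assms by (auto intro!: NM_mult NM_prod NM_tvar)

context
  fixes M :: "nat set \<Rightarrow> 'm set" and rl :: "(nat \<Rightarrow> nat) \<Rightarrow> nat set \<Rightarrow> 'm \<Rightarrow> 'm"
    and ofk :: "'k::comm_ring_1 \<Rightarrow> 'a::comm_ring_1"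
    and \<omega> :: "((nat set \<times> 'm) set, 'k) mpoly \<Rightarrow> 'a"
  assumes \<omega>: "alg_hom_on (NM M rl) ofk \<omega>"
begin

lemma alg_hom_on_NM_1: "\<omega> 1 = 1"
  using \<omega> by (simp add: alg_hom_on_def)

lemma alg_hom_on_NM_mult: "p \<in> NM M rl \<Longrightarrow> q \<in> NM M rl \<Longrightarrow> \<omega> (p * q) = \<omega> p * \<omega> q"
  using \<omega> unfolding alg_hom_on_def by blast

lemma alg_hom_on_NM_0: "\<omega> 0 = 0"
proof -
  have "\<omega> (0 + 0) = \<omega> 0 + \<omega> 0"
    using \<omega> NM_0 unfolding alg_hom_on_def by blast
  then show ?thesis
    by simp
qed

lemma alg_hom_on_NM_sum:
  "(\<And>i. i \<in> A \<Longrightarrow> f i \<in> NM M rl) \<Longrightarrow> \<omega> (sum f A) = (\<Sum>i\<in>A. \<omega> (f i))"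
proof (induction A rule: infinite_finite_induct)
  case (insert x F)
  then show ?case
    using \<omega> NM_sum[of F f] unfolding alg_hom_on_def by simp
qed (auto simp: alg_hom_on_NM_0)

lemma alg_hom_on_NM_prod:
  "(\<And>i. i \<in> A \<Longrightarrow> f i \<in> NM M rl) \<Longrightarrow> \<omega> (prod f A) = (\<Prod>i\<in>A. \<omega> (f i))"
proof (induction A rule: infinite_finite_induct)
  case (insert x F)
  then show ?case
    using alg_hom_on_NM_mult NM_prod[of F f] by simp
qed (auto simp: alg_hom_on_NM_1)

lemma alg_hom_on_NM_comp_weight:
  assumes "\<And>B. B \<in> \<pi> \<Longrightarrow> g (tp rl B (f B)) \<in> NM M rl" "tp rl (Min ` \<pi>) m' \<in> types M rl"
  shows "\<omega> (comp_weight rl g (tvar M rl) ((\<pi>, f), m')) = comp_weight rl (\<omega> \<circ> g) (\<omega> \<circ> tvar M rl) ((\<pi>, f), m')"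
proof -
  have "(\<Prod>B\<in>\<pi>. g (tp rl B (f B))) \<in> NM M rl"
    using assms(1) by (rule NM_prod)
  then have "\<omega> (comp_weight rl g (tvar M rl) ((\<pi>, f), m')) =
      \<omega> (\<Prod>B\<in>\<pi>. g (tp rl B (f B))) * \<omega> (tvar M rl (tp rl (Min ` \<pi>) m'))"
    using alg_hom_on_NM_mult NM_tvar[OF assms(2)] by simp
  then show ?thesis
    using alg_hom_on_NM_prod[of \<pi> "\<lambda>B. g (tp rl B (f B))"] assms(1) by simp
qed

end

lemma coprod_pvar:
  "coprod M rl \<eta> (pvar \<alpha> :: (_, 'k::comm_ring_1) mpoly) = coprod_str M rl \<eta> (fst (type_rep \<alpha>)) (snd (type_rep \<alpha>))"
  by (simp add: coprod_def type_rep_def case_prod_beta)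

lemma psubst_comp_weight:
  "psubst \<phi> (comp_weight rl g h x) = comp_weight rl (\<lambda>\<beta>. psubst \<phi> (g \<beta>)) (\<lambda>\<beta>. psubst \<phi> (h \<beta>)) x"
  by (cases x) (auto simp: comp_weight_def psubst_mult psubst_prod)

text \<open>Applying \<open>S \<otimes> id\<close> and multiplying, as in the defining identity of the antipode.\<close>

lemma psubst_coprod_str:
  fixes S :: "((nat set \<times> 'm) set, 'k::comm_ring_1) mpoly \<Rightarrow> ((nat set \<times> 'm) set, 'k) mpoly"
  assumes "S 1 = 1"
  shows "psubst (\<lambda>(\<alpha>, b). if b then S (tvar M rl \<alpha>) else tvar M rl \<alpha>) (coprod_str M rl \<eta> U m) =
    (\<Sum>x\<in>eta_fibre M \<eta> U m. comp_weight rl (\<lambda>\<beta>. S (tvar M rl \<beta>)) (tvar M rl) x)"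
proof -
  have "psubst (\<lambda>(\<alpha>, b). if b then S (tvar M rl \<alpha>) else tvar M rl \<alpha>) (tvar2 M rl \<beta> b) =
      (if b then S (tvar M rl \<beta>) else tvar M rl \<beta>)" for \<beta> b
    using assms by (simp add: tvar2_def tvar_def)
  then show ?thesis
    unfolding coprod_str_eq_sum_comp_weight psubst_sum psubst_comp_weight by simp
qed

context set_operad_on
begin

text \<open>The antipode identity on a generator \<open>t\<^sub>\<alpha>\<close>, with the two unit compositions split off, reads
  \<open>S(t\<^sub>\<alpha>) = - t\<^sub>\<alpha> - \<Sum> S(t\<^sub>\<tau>\<^sub>(\<^sub>a\<^sub>)) t\<^sub>\<tau>\<^sub>(\<^sub>m\<^sub>'\<^sub>)\<close> over the proper fibre, where only types of
  smaller size occur on the right. We solve it by recursion with a fuel parameter;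
  fuel \<open>type_size \<alpha>\<close> suffices.\<close>

primrec antipode_approx :: "nat \<Rightarrow> (nat set \<times> 'm) set \<Rightarrow> ((nat set \<times> 'm) set, 'k::comm_ring_1) mpoly" where
  "antipode_approx 0 \<alpha> = tvar M rl \<alpha>"
| "antipode_approx (Suc k) \<alpha> = (if \<alpha> = dot M rl then 1 else
     - (tvar M rl \<alpha> +
        (\<Sum>x\<in>proper_eta_fibre M \<eta> (fst (type_rep \<alpha>)) (snd (type_rep \<alpha>)).
           comp_weight rl (antipode_approx k) (tvar M rl) x)))"

definition antipode_gen :: "(nat set \<times> 'm) set \<Rightarrow> ((nat set \<times> 'm) set, 'k::comm_ring_1) mpoly" where
  "antipode_gen \<alpha> = antipode_approx (type_size \<alpha>) \<alpha>"

definition antipode :: "((nat set \<times> 'm) set, 'k::comm_ring_1) mpoly \<Rightarrow> ((nat set \<times> 'm) set, 'k) mpoly" where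
  "antipode = psubst (\<lambda>\<alpha>. if \<alpha> \<in> types M rl \<and> \<alpha> \<noteq> dot M rl then antipode_gen \<alpha> else pvar \<alpha>)"

lemma antipode_approx_dot: "antipode_approx k (dot M rl) = 1"
  by (cases k) (simp_all add: tvar_def)

lemma comp_weight_proper_eta_fibre_cong:
  assumes \<alpha>: "\<alpha> \<in> types M rl" and x: "x \<in> proper_eta_fibre M \<eta> (fst (type_rep \<alpha>)) (snd (type_rep \<alpha>))"
    and g: "\<And>\<beta>. \<beta> \<in> types M rl \<Longrightarrow> type_size \<beta> < type_size \<alpha> \<Longrightarrow> g \<beta> = g' \<beta>"
  shows "comp_weight rl g h x = comp_weight rl g' h x"
proof -
  obtain \<pi> f m' where x_eq: "x = ((\<pi>, f), m')"
    by (metis prod.exhaust)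
  have "(\<Prod>B\<in>\<pi>. g (tp rl B (f B))) = (\<Prod>B\<in>\<pi>. g' (tp rl B (f B)))"
    using proper_eta_fibre_types(1)[OF type_rep_of_type(1)[OF \<alpha>] x[unfolded x_eq]] g
      type_rep_of_type(4)[OF \<alpha>]
    by (intro prod.cong) auto
  then show ?thesis
    by (simp add: x_eq)
qed

lemma antipode_approx_stable:
  "\<alpha> \<in> types M rl \<Longrightarrow> type_size \<alpha> \<le> k \<Longrightarrow> (antipode_approx k \<alpha> :: (_, 'k::comm_ring_1) mpoly) = antipode_gen \<alpha>"
proof (induction "type_size \<alpha>" arbitrary: \<alpha> k rule: less_induct)
  case less
  show ?case
  proof (cases "\<alpha> = dot M rl")
    case False
    obtain n where n: "type_size \<alpha> = Suc n"
      using type_size_ge_2[OF less.prems(1) False] by (cases "type_size \<alpha>") auto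
    obtain k' where k': "k = Suc k'"
      using less.prems(2) n by (cases k) auto
    have "antipode_approx k' \<beta> = (antipode_approx n \<beta> :: (_, 'k) mpoly)"
      if "\<beta> \<in> types M rl" "type_size \<beta> < type_size \<alpha>" for \<beta>
      using less.hyps[OF that(2,1)] that(2) k' n less.prems(2) by simp
    then have "comp_weight rl (antipode_approx k') (tvar M rl) x =
        (comp_weight rl (antipode_approx n) (tvar M rl) x :: (_, 'k) mpoly)"
      if "x \<in> proper_eta_fibre M \<eta> (fst (type_rep \<alpha>)) (snd (type_rep \<alpha>))" for x
      using comp_weight_proper_eta_fibre_cong[OF less.prems(1) that] by blast
    then show ?thesis
      using False by (simp add: antipode_gen_def n k' cong: sum.cong)
  qed (simp add: antipode_gen_def antipode_approx_dot)
qed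

lemma antipode_gen_rec:
  assumes \<alpha>: "\<alpha> \<in> types M rl" "\<alpha> \<noteq> dot M rl"
  shows "(antipode_gen \<alpha> :: (_, 'k::comm_ring_1) mpoly) =
    - (tvar M rl \<alpha> + (\<Sum>x\<in>proper_eta_fibre M \<eta> (fst (type_rep \<alpha>)) (snd (type_rep \<alpha>)).
         comp_weight rl antipode_gen (tvar M rl) x))"
proof -
  obtain n where n: "type_size \<alpha> = Suc n"
    using type_size_ge_2[OF \<alpha>] by (cases "type_size \<alpha>") auto
  have "comp_weight rl (antipode_approx n) (tvar M rl) x = (comp_weight rl antipode_gen (tvar M rl) x :: (_, 'k) mpoly)"
    if "x \<in> proper_eta_fibre M \<eta> (fst (type_rep \<alpha>)) (snd (type_rep \<alpha>))" for x
    using n by (intro comp_weight_proper_eta_fibre_cong[OF \<alpha>(1) that]) (auto intro: antipode_approx_stable)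
  then show ?thesis
    using \<alpha>(2) by (simp add: antipode_gen_def n cong: sum.cong)
qed

lemma antipode_gen_in_NM: "\<alpha> \<in> types M rl \<Longrightarrow> (antipode_gen \<alpha> :: (_, 'k::comm_ring_1) mpoly) \<in> NM M rl"
proof (induction "type_size \<alpha>" arbitrary: \<alpha> rule: less_induct)
  case less
  show ?case
  proof (cases "\<alpha> = dot M rl")
    case False
    have "(comp_weight rl antipode_gen (tvar M rl) x :: (_, 'k) mpoly) \<in> NM M rl"
      if x: "x \<in> proper_eta_fibre M \<eta> (fst (type_rep \<alpha>)) (snd (type_rep \<alpha>))" for x
    proof -
      obtain \<pi> f m' where x_eq: "x = ((\<pi>, f), m')"
        by (metis prod.exhaust)
      note types = proper_eta_fibre_types[OF type_rep_of_type(1)[OF less.prems] x[unfolded x_eq]]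
      show ?thesis
        unfolding x_eq using types less.hyps type_rep_of_type(4)[OF less.prems]
        by (intro NM_comp_weight) auto
    qed
    then show ?thesis
      unfolding antipode_gen_rec[OF less.prems False]
      by (intro NM_uminus NM_add NM_tvar[OF less.prems] NM_sum)
  qed (simp add: antipode_gen_def antipode_approx_dot)
qed

lemma antipode_tvar: "\<beta> \<in> types M rl \<Longrightarrow> antipode (tvar M rl \<beta>) = antipode_gen \<beta>"
  by (cases "\<beta> = dot M rl") (auto simp: antipode_def tvar_def antipode_gen_def antipode_approx_dot)

lemma antipode_1: "antipode 1 = 1"
  by (simp add: antipode_def)

lemma antipode_identity_gen:
  assumes \<alpha>: "\<alpha> \<in> types M rl" "\<alpha> \<noteq> dot M rl"
  shows "psubst (\<lambda>(\<beta>, b). if b then antipode (tvar M rl \<beta>) else tvar M rl \<beta>)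
           (coprod_str M rl \<eta> (fst (type_rep \<alpha>)) (snd (type_rep \<alpha>))) = (0 :: (_, 'k::comm_ring_1) mpoly)"
proof -
  let ?U = "fst (type_rep \<alpha>)" and ?m = "snd (type_rep \<alpha>)"
  let ?g = "\<lambda>\<beta>. antipode (tvar M rl \<beta>) :: (_, 'k) mpoly"
  note rep = type_rep_of_type[OF \<alpha>(1)]
  have "2 \<le> card ?U"
    using type_size_ge_2[OF \<alpha>] rep(4) by simp
  have "psubst (\<lambda>(\<beta>, b). if b then ?g \<beta> else tvar M rl \<beta>) (coprod_str M rl \<eta> ?U ?m) =
      (\<Sum>x\<in>eta_fibre M \<eta> ?U ?m. comp_weight rl ?g (tvar M rl) x)"
    by (rule psubst_coprod_str[where S=antipode, OF antipode_1])
  also have "\<dots> = tvar M rl \<alpha> + antipode_gen \<alpha> +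
      (\<Sum>x\<in>proper_eta_fibre M \<eta> ?U ?m. comp_weight rl ?g (tvar M rl) x)"
    using sum_comp_weight_eta_fibre_split[OF rep(1,2) \<open>2 \<le> card ?U\<close>, of ?g "tvar M rl"]
      rep(3) antipode_tvar[OF \<alpha>(1)]
    by (simp add: tvar_def antipode_1)
  also have "(\<Sum>x\<in>proper_eta_fibre M \<eta> ?U ?m. comp_weight rl ?g (tvar M rl) x) =
      (\<Sum>x\<in>proper_eta_fibre M \<eta> ?U ?m. comp_weight rl antipode_gen (tvar M rl) x)"
    by (rule sum.cong[OF refl], rule comp_weight_proper_eta_fibre_cong[OF \<alpha>(1)]) (simp_all add: antipode_tvar)
  also have "tvar M rl \<alpha> + antipode_gen \<alpha> + \<dots> = 0"
    by (simp add: antipode_gen_rec[OF \<alpha>] algebra_simps)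
  finally show ?thesis .
qed

lemma is_antipode_antipode: "is_antipode M rl \<eta> (antipode :: _ \<Rightarrow> ((nat set \<times> 'm) set, 'k::comm_ring_1) mpoly)"
  unfolding is_antipode_def
proof (intro conjI ballI)
  show "(antipode :: _ \<Rightarrow> ((nat set \<times> 'm) set, 'k) mpoly) ` NM M rl \<subseteq> NM M rl"
  proof (rule image_subsetI)
    fix p :: "((nat set \<times> 'm) set, 'k) mpoly"
    assume p: "p \<in> NM M rl"
    show "antipode p \<in> NM M rl"
      unfolding antipode_def
    proof (rule NM_psubst)
      fix mn v
      assume "mn \<in> Poly_Mapping.keys p" "v \<in> Poly_Mapping.keys mn"
      then have "v \<in> types M rl" "v \<noteq> dot M rl"
        using p by (auto simp: NM_iff)
      then show "(if v \<in> types M rl \<and> v \<noteq> dot M rl then antipode_gen v else pvar v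
          :: ((nat set \<times> 'm) set, 'k) mpoly) \<in> NM M rl"
        by (simp add: antipode_gen_in_NM)
    qed
  qed
  show "alg_hom_on (NM M rl) pconst (antipode :: _ \<Rightarrow> ((nat set \<times> 'm) set, 'k) mpoly)"
    unfolding alg_hom_on_def antipode_def by (simp add: psubst_add psubst_mult)
  fix p :: "((nat set \<times> 'm) set, 'k) mpoly"
  assume p: "p \<in> NM M rl"
  let ?\<Phi> = "\<lambda>(\<beta>, b). if b then antipode (tvar M rl \<beta>) else tvar M rl \<beta>"
  have "psubst ?\<Phi> (coprod M rl \<eta> p) =
      psubst (\<lambda>\<alpha>. psubst ?\<Phi> (coprod_str M rl \<eta> (fst (type_rep \<alpha>)) (snd (type_rep \<alpha>)))) p"
    unfolding coprod_def psubst_psubst by (simp add: type_rep_def case_prod_beta)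
  also have "\<dots> = pconst (counit p)"
    unfolding counit_def
    using p antipode_identity_gen by (intro psubst_eq_constant_term) (auto simp: NM_iff)
  finally show "psubst ?\<Phi> (coprod M rl \<eta> p) = pconst (counit p)" .
qed

text \<open>The antipode identity at \<open>t\<^sub>\<alpha>\<close>, whose counit is \<open>0\<close>.\<close>

lemma sum_comp_weight_eta_fibre_antipode:
  fixes S :: "((nat set \<times> 'm) set, 'k::comm_ring_1) mpoly \<Rightarrow> ((nat set \<times> 'm) set, 'k) mpoly"
  assumes S: "is_antipode M rl \<eta> S" and U: "finite U" and m: "m \<in> M U" and "2 \<le> card U"
  shows "(\<Sum>x\<in>eta_fibre M \<eta> U m. comp_weight rl (\<lambda>\<beta>. S (tvar M rl \<beta>)) (tvar M rl) x) = 0"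
proof -
  let ?\<alpha> = "tp rl U m"
  have \<alpha>: "?\<alpha> \<in> types M rl" "?\<alpha> \<noteq> dot M rl"
    using tp_in_types[OF U m] tp_neq_dot[OF U m] assms(4) by auto
  have S1: "S 1 = 1"
    using S by (simp add: is_antipode_def alg_hom_on_def)
  have "Poly_Mapping.single ?\<alpha> (1::nat) \<noteq> 0"
    by (metis lookup_single_eq lookup_zero one_neq_zero)
  then have "counit (pvar ?\<alpha> :: (_, 'k) mpoly) = 0"
    by (simp add: counit_def pvar_def lookup_single when_def)
  moreover have "psubst (\<lambda>(\<beta>, b). if b then S (tvar M rl \<beta>) else tvar M rl \<beta>) (coprod M rl \<eta> (pvar ?\<alpha>)) =
      pconst (counit (pvar ?\<alpha> :: (_, 'k) mpoly))"
    using S NM_pvar[OF \<alpha>] unfolding is_antipode_def by blast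
  moreover have "(fst (type_rep ?\<alpha>), snd (type_rep ?\<alpha>)) \<in> ?\<alpha>"
    using type_rep_tp(1)[OF U m] by simp
  then have "coprod M rl \<eta> (pvar ?\<alpha> :: (_, 'k) mpoly) = coprod_str M rl \<eta> U m"
    unfolding coprod_pvar by (rule coprod_str_tp_invariant[OF U m])
  ultimately show ?thesis
    using psubst_coprod_str[where S=S, OF S1] by simp
qed

end

section \<open>Exponential generating series\<close>

lemma fps_power_Suc_nth_Suc:
  fixes B :: "'a::comm_ring_1 fps"
  shows "of_nat (Suc n) * (B ^ Suc k) $ Suc n =
    of_nat (Suc k) * (\<Sum>i=0..n. of_nat (Suc i) * B $ Suc i * (B ^ k) $ (n - i))"
proof -
  have "of_nat (Suc n) * (B ^ Suc k) $ Suc n = fps_deriv (B ^ Suc k) $ n"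
    by (simp only: fps_deriv_nth Suc_eq_plus1)
  also have "\<dots> = (of_nat (Suc k) * fps_deriv B * B ^ (Suc k - 1)) $ n"
    by (subst fps_deriv_power') (rule refl)
  also have "\<dots> = (fps_const (of_nat (Suc k)) * (fps_deriv B * B ^ k)) $ n"
    by (simp only: fps_of_nat mult.assoc diff_Suc_1)
  also have "\<dots> = of_nat (Suc k) * (\<Sum>i=0..n. of_nat (Suc i) * B $ Suc i * (B ^ k) $ (n - i))"
    by (simp only: fps_mult_left_const_nth) (simp add: fps_mult_nth mult.assoc del: of_nat_Suc)
  finally show ?thesis .
qed

lemma sum_partitions_into_Suc:
  fixes G :: "nat \<Rightarrow> 'a::comm_semiring_1"
  assumes U: "finite U" and u: "u \<in> U"
  shows "(\<Sum>\<pi>\<in>partitions_into U (Suc k). \<Prod>C\<in>\<pi>. G (card C)) =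
    (\<Sum>C | u \<in> C \<and> C \<subseteq> U. G (card C) * (\<Sum>\<pi>\<in>partitions_into (U - C) k. \<Prod>D\<in>\<pi>. G (card D)))"
    (is "?lhs = ?rhs")
proof -
  let ?Cs = "{C. u \<in> C \<and> C \<subseteq> U}"
  have prod_insert: "(\<Prod>D\<in>insert C \<pi>. G (card D)) = G (card C) * (\<Prod>D\<in>\<pi>. G (card D))"
    if "C \<in> ?Cs" "\<pi> \<in> partitions_into (U - C) k" for C \<pi>
  proof -
    have "C \<notin> \<pi>"
      using that partition_on_block_subset[of "U - C" \<pi>] by blast
    moreover have "finite \<pi>"
      using that U finite_elements[of "U - C" \<pi>] by simp
    ultimately show ?thesis
      by simp
  qed
  have "?lhs = (\<Sum>(C, \<pi>)\<in>(SIGMA C:?Cs. partitions_into (U - C) k). \<Prod>D\<in>insert C \<pi>. G (card D))"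
    using sum.reindex_bij_betw[OF bij_betw_insert_block[OF U u, of k], of "\<lambda>\<pi>. \<Prod>D\<in>\<pi>. G (card D)"]
    by (simp add: case_prod_unfold)
  also have "\<dots> = (\<Sum>C\<in>?Cs. \<Sum>\<pi>\<in>partitions_into (U - C) k. \<Prod>D\<in>insert C \<pi>. G (card D))"
    by (rule sum.Sigma[symmetric]) (use U finite_partitions_into in auto)
  also have "\<dots> = (\<Sum>C\<in>?Cs. \<Sum>\<pi>\<in>partitions_into (U - C) k. G (card C) * (\<Prod>D\<in>\<pi>. G (card D)))"
    by (rule sum.cong[OF refl], rule sum.cong[OF refl], rule prod_insert)
  also have "\<dots> = ?rhs"
    by (simp add: sum_distrib_left)
  finally show ?thesis .
qed

lemma binomial_fact_mult_nth:
  fixes B C :: "'a::comm_ring_1 fps"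
  assumes "i \<le> n"
  shows "of_nat (n choose i) * (of_nat (fact (Suc i)) * B $ Suc i) * (of_nat (fact (n - i)) * C $ (n - i)) =
    of_nat (fact n) * (of_nat (Suc i) * B $ Suc i * C $ (n - i))"
proof -
  have nat_id: "(n choose i) * fact (Suc i) * fact (n - i) = fact n * Suc i"
    using binomial_fact_lemma[OF assms] by (simp add: algebra_simps)
  have "of_nat (n choose i) * (of_nat (fact (Suc i)) * B $ Suc i) * (of_nat (fact (n - i)) * C $ (n - i)) =
      of_nat ((n choose i) * fact (Suc i) * fact (n - i)) * (B $ Suc i * C $ (n - i))"
    by (simp only: of_nat_mult mult_ac)
  also have "\<dots> = of_nat (fact n) * (of_nat (Suc i) * B $ Suc i * C $ (n - i))"
    by (subst nat_id) (simp only: of_nat_mult mult_ac)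
  finally show ?thesis .
qed

text \<open>The induction step removes the
  block of a fixed point \<open>u\<close>; on the series side it is the derivative rule for \<open>B\<^sup>k\<^sup>+\<^sup>1\<close>.\<close>

lemma partitions_into_power_nth_Suc:
  fixes B :: "'a::comm_ring_1 fps"
  assumes G: "\<And>n. of_nat (fact n) * B $ n = G n" and U: "finite U" "card U = Suc n" and u: "u \<in> U"
    and IH: "\<And>V. V \<subset> U \<Longrightarrow>
      of_nat (fact k) * (\<Sum>\<pi>\<in>partitions_into V k. \<Prod>C\<in>\<pi>. G (card C)) = of_nat (fact (card V)) * (B ^ k) $ card V"
  shows "of_nat (fact (Suc k)) * (\<Sum>\<pi>\<in>partitions_into U (Suc k). \<Prod>C\<in>\<pi>. G (card C)) =
    of_nat (fact (card U)) * (B ^ Suc k) $ card U"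
proof -
  let ?P = "\<lambda>V. \<Sum>\<pi>\<in>partitions_into V k. \<Prod>C\<in>\<pi>. G (card C)"
  define F where "F j = G j * (of_nat (fact (card U - j)) * (B ^ k) $ (card U - j))" for j
  have F_card: "G (card C) * (of_nat (fact k) * ?P (U - C)) = F (card C)" if "u \<in> C" "C \<subseteq> U" for C
  proof -
    have "card (U - C) = card U - card C"
      using that U(1) finite_subset by (metis card_Diff_subset)
    moreover have "U - C \<subset> U"
      using that u by blast
    ultimately show ?thesis
      using IH[of "U - C"] by (simp add: F_def)
  qed
  have "of_nat (fact (Suc k)) * (\<Sum>\<pi>\<in>partitions_into U (Suc k). \<Prod>C\<in>\<pi>. G (card C)) =
      of_nat (Suc k) * (\<Sum>C | u \<in> C \<and> C \<subseteq> U. G (card C) * (of_nat (fact k) * ?P (U - C)))"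
    unfolding sum_partitions_into_Suc[OF U(1) u] fact_Suc of_nat_mult of_nat_id
    by (simp only: sum_distrib_left mult.assoc mult.left_commute)
  also have "\<dots> = of_nat (Suc k) * (\<Sum>i=0..n. of_nat (n choose i) * F (Suc i))"
    using F_card sum_subsets_containing_by_card[OF U(1) u, of F] U(2) by simp
  also have "\<dots> = of_nat (fact n) * (of_nat (Suc k) * (\<Sum>i=0..n. of_nat (Suc i) * B $ Suc i * (B ^ k) $ (n - i)))"
    using binomial_fact_mult_nth[where B = B and C = "B ^ k"] G[symmetric] U(2)
    by (simp add: F_def sum_distrib_left mult_ac)
  also have "\<dots> = of_nat (fact (card U)) * (B ^ Suc k) $ card U"
    unfolding fps_power_Suc_nth_Suc[symmetric] U(2) by (simp add: algebra_simps)
  finally show ?thesis .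
qed

lemma partitions_into_power_nth:
  fixes B :: "'a::comm_ring_1 fps"
  assumes B0: "B $ 0 = 0" and G: "\<And>n. of_nat (fact n) * B $ n = G n" and U: "finite U"
  shows "of_nat (fact k) * (\<Sum>\<pi>\<in>partitions_into U k. \<Prod>C\<in>\<pi>. G (card C)) =
    of_nat (fact (card U)) * (B ^ k) $ card U"
  using U
proof (induction "card U" arbitrary: U k rule: less_induct)
  case less
  show ?case
  proof (cases "U = {}")
    case True
    then show ?thesis
      using startsby_zero_power[OF B0, of k] by (cases k) (simp_all add: partitions_into_empty)
  next
    case False
    obtain n where n: "card U = Suc n"
      using False less.prems by (cases "card U") auto
    have IH: "of_nat (fact k') * (\<Sum>\<pi>\<in>partitions_into V k'. \<Prod>C\<in>\<pi>. G (card C)) =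
        of_nat (fact (card V)) * (B ^ k') $ card V" if "V \<subset> U" for V k'
      using less.hyps[OF psubset_card_mono[OF less.prems that]] finite_subset[of V U] that less.prems by auto
    show ?thesis
    proof (cases k)
      case 0
      then show ?thesis
        unfolding 0 partitions_into_0[OF less.prems False] using n by simp
    next
      case (Suc k')
      then show ?thesis
        using partitions_into_power_nth_Suc[OF G less.prems n Min_in[OF less.prems False] IH] by simp
    qed
  qed
qed

text \<open>The library proves that composition is multiplicative and associative over integral
  domains only; the coefficient rings here are merely commutative.\<close>

lemma fps_compose_nth_upto:
  fixes a c :: "'a::comm_ring_1 fps"
  assumes "c $ 0 = 0" "n \<le> N"
  shows "(a oo c) $ n = (\<Sum>i=0..N. a $ i * (c ^ i) $ n)"
  unfolding fps_compose_nth
  using assms startsby_zero_power_prefix[OF assms(1)] by (intro sum.mono_neutral_left) auto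

lemma fps_compose_mult_distrib_comm_ring:
  fixes a b c :: "'a::comm_ring_1 fps"
  assumes c0: "c $ 0 = 0"
  shows "(a * b) oo c = (a oo c) * (b oo c)"
proof (rule fps_ext)
  fix n
  have vanish: "a $ i * b $ k * (c ^ (i + k)) $ n = 0" if "n < i + k" for i k
    using startsby_zero_power_prefix[OF c0, of "i + k"] that by simp
  have "((a oo c) * (b oo c)) $ n =
      (\<Sum>j=0..n. (\<Sum>i=0..n. a $ i * (c ^ i) $ j) * (\<Sum>k=0..n. b $ k * (c ^ k) $ (n - j)))"
    by (simp add: fps_mult_nth fps_compose_nth_upto[OF c0, where N=n])
  also have "\<dots> = (\<Sum>j=0..n. \<Sum>i=0..n. \<Sum>k=0..n. a $ i * b $ k * ((c ^ i) $ j * (c ^ k) $ (n - j)))"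
    by (simp add: sum_product mult_ac)
  also have "\<dots> = (\<Sum>i=0..n. \<Sum>j=0..n. \<Sum>k=0..n. a $ i * b $ k * ((c ^ i) $ j * (c ^ k) $ (n - j)))"
    by (rule sum.swap)
  also have "\<dots> = (\<Sum>i=0..n. \<Sum>k=0..n. \<Sum>j=0..n. a $ i * b $ k * ((c ^ i) $ j * (c ^ k) $ (n - j)))"
    by (rule sum.cong[OF refl], rule sum.swap)
  also have "\<dots> = (\<Sum>i=0..n. \<Sum>k=0..n. a $ i * b $ k * (\<Sum>j=0..n. (c ^ i) $ j * (c ^ k) $ (n - j)))"
    by (simp add: sum_distrib_left)
  also have "\<dots> = (\<Sum>(i, k)\<in>{0..n} \<times> {0..n}. a $ i * b $ k * (c ^ (i + k)) $ n)"
    by (simp add: sum.cartesian_product fps_mult_nth[symmetric] power_add)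
  also have "\<dots> = (\<Sum>(i, k)\<in>{(i, k). i + k \<le> n}. a $ i * b $ k * (c ^ (i + k)) $ n)"
    by (rule sum.mono_neutral_right) (auto, metis not_le vanish)
  also have "\<dots> = (\<Sum>s=0..n. \<Sum>i=0..s. a $ i * b $ (s - i) * (c ^ s) $ n)"
    by (rule sum_pair_less_iff[where a = "\<lambda>i. a $ i" and b = "\<lambda>k. b $ k" and c = "\<lambda>s. (c ^ s) $ n"])
  also have "\<dots> = ((a * b) oo c) $ n"
    by (simp add: fps_compose_nth fps_mult_nth sum_distrib_right)
  finally show "((a * b) oo c) $ n = ((a oo c) * (b oo c)) $ n" ..
qed

lemma fps_compose_power_comm_ring:
  fixes a c :: "'a::comm_ring_1 fps"
  assumes "c $ 0 = 0"
  shows "(a oo c) ^ n = a ^ n oo c"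
  by (induction n) (simp_all add: fps_compose_mult_distrib_comm_ring[OF assms])

lemma fps_compose_assoc_comm_ring:
  fixes a b c :: "'a::comm_ring_1 fps"
  assumes c0: "c $ 0 = 0" and b0: "b $ 0 = 0"
  shows "a oo (b oo c) = (a oo b) oo c"
proof (rule fps_ext)
  fix n
  have "(a oo (b oo c)) $ n = (\<Sum>i=0..n. a $ i * (\<Sum>j=0..n. (b ^ i) $ j * (c ^ j) $ n))"
    by (simp add: fps_compose_nth fps_compose_power_comm_ring[OF c0])
  also have "\<dots> = (\<Sum>i=0..n. \<Sum>j=0..n. a $ i * ((b ^ i) $ j * (c ^ j) $ n))"
    by (simp add: sum_distrib_left)
  also have "\<dots> = (\<Sum>j=0..n. \<Sum>i=0..n. a $ i * ((b ^ i) $ j * (c ^ j) $ n))"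
    by (rule sum.swap)
  also have "\<dots> = (\<Sum>j=0..n. (\<Sum>i=0..n. a $ i * (b ^ i) $ j) * (c ^ j) $ n)"
    by (simp add: sum_distrib_right mult.assoc)
  also have "\<dots> = (\<Sum>j=0..n. (a oo b) $ j * (c ^ j) $ n)"
    by (intro sum.cong refl) (simp add: fps_compose_nth_upto[OF b0, where N=n])
  also have "\<dots> = ((a oo b) oo c) $ n"
    by (rule fps_compose_nth[symmetric])
  finally show "(a oo (b oo c)) $ n = ((a oo b) oo c) $ n" .
qed

lemma fps_compose_eq_0_cancel:
  fixes d b :: "'a::comm_ring_1 fps"
  assumes b0: "b $ 0 = 0" and b1: "b $ 1 = 1" and "d oo b = 0"
  shows "d = 0"
proof (rule fps_ext)
  fix k
  show "d $ k = 0 $ k"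
  proof (induction k rule: less_induct)
    case (less k)
    have "0 = (\<Sum>i=0..k. d $ i * (b ^ i) $ k)"
      using assms(3) fps_compose_nth[of d b k] by simp
    also have "\<dots> = d $ k * (b ^ k) $ k"
      using less.IH by (subst sum.mono_neutral_right[of _ "{k}"]) auto
    also have "\<dots> = d $ k"
      using startsby_zero_power_nth_same[OF b0, of k] b1 by simp
    finally show ?case
      by simp
  qed
qed

lemma fps_compose_left_inverse_imp_right_inverse:
  fixes a b :: "'a::comm_ring_1 fps"
  assumes a0: "a $ 0 = 0" and b0: "b $ 0 = 0" and b1: "b $ 1 = 1" and ab: "a oo b = fps_X"
  shows "b oo a = fps_X"
proof -
  have "(b oo a) oo b = b oo (a oo b)"
    by (rule fps_compose_assoc_comm_ring[OF b0 a0, symmetric])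
  also have "\<dots> = fps_X oo b"
    using ab b0 by simp
  finally have "((b oo a) - fps_X) oo b = 0"
    by (simp add: fps_compose_sub_distrib)
  then have "(b oo a) - fps_X = 0"
    by (rule fps_compose_eq_0_cancel[OF b0 b1])
  then show ?thesis
    by simp
qed

definition weighted_count :: "(nat set \<Rightarrow> 'm set) \<Rightarrow> ((nat \<Rightarrow> nat) \<Rightarrow> nat set \<Rightarrow> 'm \<Rightarrow> 'm)
   \<Rightarrow> ((nat set \<times> 'm) set \<Rightarrow> 'a::comm_semiring_1) \<Rightarrow> nat \<Rightarrow> 'a" where
  "weighted_count M rl w n = (\<Sum>m\<in>M {1..n}. w (tp rl {1..n} m))"

lemma (in species_on) weighted_count_card:
  "finite V \<Longrightarrow> weighted_count M rl w (card V) = (\<Sum>m\<in>M V. w (tp rl V m))"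
  unfolding weighted_count_def by (rule sum_structures_card_eq) auto

lemma ring_hom_k_of_nat: "ring_hom_k ofk \<Longrightarrow> ofk (of_nat n) = of_nat n"
proof (induction n)
  case 0
  then have "ofk (0 + 0) = ofk 0 + ofk 0"
    unfolding ring_hom_k_def by blast
  then show ?case
    by simp
next
  case (Suc n)
  then show ?case
    unfolding ring_hom_k_def by (metis of_nat_Suc add.commute)
qed

lemma ring_hom_k_inverse_fact:
  fixes ofk :: "'k::field_char_0 \<Rightarrow> 'a::comm_ring_1"
  assumes "ring_hom_k ofk"
  shows "of_nat (fact n) * ofk (1 / fact n) = 1"
proof -
  have mult: "ofk (x * y) = ofk x * ofk y" for x y
    using assms unfolding ring_hom_k_def by blast
  have "ofk (fact n) = of_nat (fact n)"
    using ring_hom_k_of_nat[OF assms, of "fact n"] by (simp add: of_nat_fact)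
  then have "of_nat (fact n) * ofk (1 / fact n) = ofk (fact n * (1 / fact n))"
    by (simp only: mult)
  also have "\<dots> = 1"
    using assms unfolding ring_hom_k_def by simp
  finally show ?thesis .
qed

lemma ring_hom_k_fact_mult_eq_0:
  fixes ofk :: "'k::field_char_0 \<Rightarrow> 'a::comm_ring_1"
  assumes "ring_hom_k ofk" "of_nat (fact n) * c = 0"
  shows "c = (0 :: 'a)"
proof -
  have "c = (of_nat (fact n) * ofk (1 / fact n)) * c"
    using ring_hom_k_inverse_fact[OF assms(1)] by simp
  also have "\<dots> = ofk (1 / fact n) * (of_nat (fact n) * c)"
    by (simp only: mult_ac)
  finally show ?thesis
    using assms(2) by simp
qed

lemma Mser_nth_0: "Mser M rl ofk \<omega> $ 0 = 0"
  by (simp add: Mser_def)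

lemma Mser_nth_1: "Mser M rl ofk \<omega> $ 1 = 1"
  by (simp add: Mser_def)

lemma (in set_operad_on) fact_mult_Mser_nth:
  fixes ofk :: "'k::field_char_0 \<Rightarrow> 'a::comm_ring_1"
  assumes ofk: "ring_hom_k ofk" and \<omega>1: "\<omega> 1 = 1"
  shows "of_nat (fact n) * Mser M rl ofk \<omega> $ n = weighted_count M rl (\<lambda>\<alpha>. \<omega> (tvar M rl \<alpha>)) n"
proof -
  consider "n = 0" | "n = 1" | "n \<ge> 2"
    by linarith
  then show ?thesis
  proof cases
    case 1
    then show ?thesis
      by (simp add: Mser_def weighted_count_def no_structures_on_empty)
  next
    case 2
    obtain e where e: "M {1} = {e}"
      using structures_on_singleton by blast
    then have "tp rl {1} e = dot M rl"
      using tp_singleton by simp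
    then show ?thesis
      using 2 e \<omega>1 by (simp add: Mser_def weighted_count_def tvar_def)
  next
    case 3
    have "of_nat (fact n) * (W * ofk (1 / fact n)) = W" for W
      using ring_hom_k_inverse_fact[OF ofk, of n] by (metis mult.left_commute mult.right_neutral)
    then show ?thesis
      using 3 by (simp add: Mser_def weighted_count_def)
  qed
qed

lemma sum_compM_comp_weight:
  assumes U: "finite U" and fin: "\<And>V. finite V \<Longrightarrow> finite (M V)"
  shows "(\<Sum>x\<in>compM M U. comp_weight rl g h x) =
    (\<Sum>\<pi> | partition_on U \<pi>. (\<Sum>m'\<in>M (Min ` \<pi>). h (tp rl (Min ` \<pi>) m')) * (\<Prod>C\<in>\<pi>. \<Sum>m\<in>M C. g (tp rl C m)))"
proof -
  have parts: "finite {\<pi>. partition_on U \<pi>}"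
    by (rule finitely_many_partition_on[OF U])
  have PiE: "finite (PiE \<pi> M)" if "partition_on U \<pi>" for \<pi>
    using fin partition_on_block_finite[OF U that] finite_elements[OF U that] by (intro finite_PiE) auto
  have fin_outer: "\<forall>a\<in>(SIGMA \<pi>:{\<pi>. partition_on U \<pi>}. PiE \<pi> M). finite (M (Min ` fst a))"
    using fin finite_elements[OF U] by (auto intro!: finite_imageI)
  have "(\<Sum>(a, m')\<in>compM M U. comp_weight rl g h (a, m')) =
      (\<Sum>a\<in>(SIGMA \<pi>:{\<pi>. partition_on U \<pi>}. PiE \<pi> M). \<Sum>m'\<in>M (Min ` fst a). comp_weight rl g h (a, m'))"
    unfolding compM_eq_Sigma using parts PiE by (intro sum.Sigma[symmetric] fin_outer) auto
  also have "\<dots> = (\<Sum>\<pi> | partition_on U \<pi>. \<Sum>f\<in>PiE \<pi> M. \<Sum>m'\<in>M (Min ` \<pi>). comp_weight rl g h ((\<pi>, f), m'))"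
    using sum.Sigma[symmetric, OF parts, of "\<lambda>\<pi>. PiE \<pi> M" "\<lambda>\<pi> f. \<Sum>m'\<in>M (Min ` \<pi>). comp_weight rl g h ((\<pi>, f), m')"] PiE
    by (simp add: split_def comp_weight_def)
  finally have "(\<Sum>x\<in>compM M U. comp_weight rl g h x) =
      (\<Sum>\<pi> | partition_on U \<pi>. \<Sum>f\<in>PiE \<pi> M. \<Sum>m'\<in>M (Min ` \<pi>). comp_weight rl g h ((\<pi>, f), m'))"
    by (simp add: case_prod_beta')
  also have "\<dots> = (\<Sum>\<pi> | partition_on U \<pi>.
      (\<Sum>m'\<in>M (Min ` \<pi>). h (tp rl (Min ` \<pi>) m')) * (\<Sum>f\<in>PiE \<pi> M. \<Prod>C\<in>\<pi>. g (tp rl C (f C))))"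
    by (simp add: sum_distrib_left sum_distrib_right mult.commute)
  also have "\<dots> = (\<Sum>\<pi> | partition_on U \<pi>.
      (\<Sum>m'\<in>M (Min ` \<pi>). h (tp rl (Min ` \<pi>) m')) * (\<Prod>C\<in>\<pi>. \<Sum>m\<in>M C. g (tp rl C m)))"
    using U by (intro sum.cong refl arg_cong2[where f = "(*)"] prod_sum_PiE[symmetric])
      (auto dest: finite_elements intro!: fin intro: partition_on_block_finite[OF U])
  finally show ?thesis .
qed

lemma (in set_operad_on) sum_compM_comp_weight_eq_weighted_count:
  assumes U: "finite U"
  shows "(\<Sum>x\<in>compM M U. comp_weight rl g h x) =
    (\<Sum>\<pi> | partition_on U \<pi>. weighted_count M rl h (card \<pi>) * (\<Prod>C\<in>\<pi>. weighted_count M rl g (card C)))"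
proof -
  have "(\<Sum>x\<in>compM M U. comp_weight rl g h x) =
      (\<Sum>\<pi> | partition_on U \<pi>. (\<Sum>m'\<in>M (Min ` \<pi>). h (tp rl (Min ` \<pi>) m')) * (\<Prod>C\<in>\<pi>. \<Sum>m\<in>M C. g (tp rl C m)))"
    by (rule sum_compM_comp_weight[OF U finite_structures])
  also have "\<dots> = (\<Sum>\<pi> | partition_on U \<pi>. weighted_count M rl h (card \<pi>) * (\<Prod>C\<in>\<pi>. weighted_count M rl g (card C)))"
  proof (rule sum.cong[OF refl])
    fix \<pi>
    assume "\<pi> \<in> {\<pi>. partition_on U \<pi>}"
    then have \<pi>: "partition_on U \<pi>"
      by simp
    have "weighted_count M rl h (card \<pi>) = (\<Sum>m'\<in>M (Min ` \<pi>). h (tp rl (Min ` \<pi>) m'))"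
      using weighted_count_card[of "Min ` \<pi>"] card_image[OF inj_on_Min_partition[OF U \<pi>]]
        finite_elements[OF U \<pi>] by simp
    moreover have "(\<Prod>C\<in>\<pi>. weighted_count M rl g (card C)) = (\<Prod>C\<in>\<pi>. \<Sum>m\<in>M C. g (tp rl C m))"
      using weighted_count_card partition_on_block_finite[OF U \<pi>] by (intro prod.cong) auto
    ultimately show "(\<Sum>m'\<in>M (Min ` \<pi>). h (tp rl (Min ` \<pi>) m')) * (\<Prod>C\<in>\<pi>. \<Sum>m\<in>M C. g (tp rl C m)) =
        weighted_count M rl h (card \<pi>) * (\<Prod>C\<in>\<pi>. weighted_count M rl g (card C))"
      by simp
  qed
  finally show ?thesis .
qed

lemma (in set_operad_on) fact_mult_Mser_compose_nth:
  fixes ofk :: "'k::field_char_0 \<Rightarrow> 'a::comm_ring_1"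
  assumes ofk: "ring_hom_k ofk" and unit: "\<omega> 1 = 1" and unit': "\<omega>' 1 = 1" and U: "finite U"
  shows "of_nat (fact (card U)) * (Mser M rl ofk \<omega> oo Mser M rl ofk \<omega>') $ card U =
    (\<Sum>x\<in>compM M U. comp_weight rl (\<lambda>\<alpha>. \<omega>' (tvar M rl \<alpha>)) (\<lambda>\<alpha>. \<omega> (tvar M rl \<alpha>)) x)"
proof -
  let ?A = "Mser M rl ofk \<omega>" and ?B = "Mser M rl ofk \<omega>'" and ?n = "card U"
  let ?G = "weighted_count M rl (\<lambda>\<alpha>. \<omega> (tvar M rl \<alpha>))"
  let ?G' = "weighted_count M rl (\<lambda>\<alpha>. \<omega>' (tvar M rl \<alpha>))"
  have power: "of_nat (fact ?n) * (?B ^ k) $ ?n = of_nat (fact k) * (\<Sum>\<pi>\<in>partitions_into U k. \<Prod>C\<in>\<pi>. ?G' (card C))"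
    for k
    using partitions_into_power_nth[OF Mser_nth_0 fact_mult_Mser_nth[where \<omega>=\<omega>', OF ofk unit'] U] by simp
  have "of_nat (fact ?n) * (?A oo ?B) $ ?n = (\<Sum>k=0..?n. ?A $ k * (of_nat (fact ?n) * (?B ^ k) $ ?n))"
    by (simp add: fps_compose_nth sum_distrib_left mult_ac)
  also have "\<dots> = (\<Sum>k=0..?n. \<Sum>\<pi>\<in>partitions_into U k. ?G (card \<pi>) * (\<Prod>C\<in>\<pi>. ?G' (card C)))"
    by (simp add: power fact_mult_Mser_nth[where \<omega>=\<omega>, OF ofk unit, symmetric] sum_distrib_left mult_ac)
  also have "\<dots> = (\<Sum>\<pi> | partition_on U \<pi>. ?G (card \<pi>) * (\<Prod>C\<in>\<pi>. ?G' (card C)))"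
    by (rule sum_partitions_into_upto_card[OF U])
  also have "\<dots> = (\<Sum>x\<in>compM M U. comp_weight rl (\<lambda>\<alpha>. \<omega>' (tvar M rl \<alpha>)) (\<lambda>\<alpha>. \<omega> (tvar M rl \<alpha>)) x)"
    by (rule sum_compM_comp_weight_eq_weighted_count[OF U, symmetric])
  finally show ?thesis .
qed

section \<open>Compositional inverses\<close>

context set_operad_on
begin

lemma sum_compM_eq_sum_eta_fibres:
  "finite U \<Longrightarrow> (\<Sum>x\<in>compM M U. F x) = (\<Sum>m\<in>M U. \<Sum>x\<in>eta_fibre M \<eta> U m. F x)"
  unfolding eta_fibre_def
  by (rule sum.group[symmetric]) (auto simp: finite_compM finite_structures eta_in)

lemma alg_hom_on_sum_comp_weight_eta_fibre:
  assumes \<omega>: "alg_hom_on (NM M rl) ofk \<omega>" and S: "S ` NM M rl \<subseteq> NM M rl" and U: "finite U"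
  shows "(\<Sum>x\<in>eta_fibre M \<eta> U m. comp_weight rl (\<lambda>\<alpha>. \<omega> (S (tvar M rl \<alpha>))) (\<lambda>\<alpha>. \<omega> (tvar M rl \<alpha>)) x) =
    \<omega> (\<Sum>x\<in>eta_fibre M \<eta> U m. comp_weight rl (\<lambda>\<beta>. S (tvar M rl \<beta>)) (tvar M rl) x)"
proof -
  let ?w = "comp_weight rl (\<lambda>\<beta>. S (tvar M rl \<beta>)) (tvar M rl)"
  have weight: "?w x \<in> NM M rl \<and>
      \<omega> (?w x) = comp_weight rl (\<lambda>\<alpha>. \<omega> (S (tvar M rl \<alpha>))) (\<lambda>\<alpha>. \<omega> (tvar M rl \<alpha>)) x"
    if x: "x \<in> eta_fibre M \<eta> U m" for x
  proof -
    obtain \<pi> f m' where x_eq: "x = ((\<pi>, f), m')"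
      by (metis prod.exhaust)
    have \<pi>: "partition_on U \<pi>" and f: "\<forall>B\<in>\<pi>. f B \<in> M B" and m': "m' \<in> M (Min ` \<pi>)"
      using x by (auto simp: eta_fibre_def compM_iff x_eq)
    have "S (tvar M rl (tp rl B (f B))) \<in> NM M rl" if "B \<in> \<pi>" for B
      using S NM_tvar tp_in_types partition_on_block_finite[OF U \<pi> that] f that by blast
    moreover have "tp rl (Min ` \<pi>) m' \<in> types M rl"
      using tp_in_types[OF _ m'] finite_elements[OF U \<pi>] by simp
    ultimately show ?thesis
      unfolding x_eq
      using NM_comp_weight[where g = "\<lambda>\<beta>. S (tvar M rl \<beta>)" and \<pi> = \<pi> and f = f and m' = m']
        alg_hom_on_NM_comp_weight[OF \<omega>, where g = "\<lambda>\<beta>. S (tvar M rl \<beta>)" and \<pi> = \<pi> and f = f and m' = m']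
      by (simp add: comp_def)
  qed
  have "\<omega> (\<Sum>x\<in>eta_fibre M \<eta> U m. ?w x) = (\<Sum>x\<in>eta_fibre M \<eta> U m. \<omega> (?w x))"
    using weight by (intro alg_hom_on_NM_sum[OF \<omega>]) blast
  also have "\<dots> = (\<Sum>x\<in>eta_fibre M \<eta> U m.
      comp_weight rl (\<lambda>\<alpha>. \<omega> (S (tvar M rl \<alpha>))) (\<lambda>\<alpha>. \<omega> (tvar M rl \<alpha>)) x)"
    using weight by (intro sum.cong refl) blast
  finally show ?thesis
    by simp
qed

lemma Mser_compose_antipode:
  fixes ofk :: "'k::field_char_0 \<Rightarrow> 'a::comm_ring_1"
    and \<omega> :: "((nat set \<times> 'm) set, 'k) mpoly \<Rightarrow> 'a"
    and S :: "((nat set \<times> 'm) set, 'k) mpoly \<Rightarrow> ((nat set \<times> 'm) set, 'k) mpoly"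
  assumes ofk: "ring_hom_k ofk" and \<omega>: "alg_hom_on (NM M rl) ofk \<omega>" and S: "is_antipode M rl \<eta> S"
  shows "Mser M rl ofk \<omega> oo Mser M rl ofk (\<omega> \<circ> S) = fps_X"
proof (rule fps_ext)
  fix n :: nat
  have S_NM: "S ` NM M rl \<subseteq> NM M rl" and S1: "S 1 = 1"
    using S by (auto simp: is_antipode_def alg_hom_on_def)
  have \<omega>1: "\<omega> 1 = 1" and \<omega>S1: "(\<omega> \<circ> S) 1 = 1"
    using alg_hom_on_NM_1[OF \<omega>] S1 by simp_all
  consider "n = 0" | "n = 1" | "n \<ge> 2"
    by linarith
  then show "(Mser M rl ofk \<omega> oo Mser M rl ofk (\<omega> \<circ> S)) $ n = fps_X $ n"
  proof cases
    case 3
    let ?U = "{1..n}"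
    have "of_nat (fact n) * (Mser M rl ofk \<omega> oo Mser M rl ofk (\<omega> \<circ> S)) $ n =
        (\<Sum>x\<in>compM M ?U. comp_weight rl (\<lambda>\<alpha>. \<omega> (S (tvar M rl \<alpha>))) (\<lambda>\<alpha>. \<omega> (tvar M rl \<alpha>)) x)"
      using fact_mult_Mser_compose_nth[where \<omega> = \<omega> and \<omega>' = "\<omega> \<circ> S" and U = ?U, OF ofk \<omega>1 \<omega>S1] by simp
    also have "\<dots> = (\<Sum>m\<in>M ?U. \<omega> (\<Sum>x\<in>eta_fibre M \<eta> ?U m. comp_weight rl (\<lambda>\<beta>. S (tvar M rl \<beta>)) (tvar M rl) x))"
      by (simp add: sum_compM_eq_sum_eta_fibres alg_hom_on_sum_comp_weight_eta_fibre[OF \<omega> S_NM])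
    also have "\<dots> = 0"
      using sum_comp_weight_eta_fibre_antipode[OF S] 3 alg_hom_on_NM_0[OF \<omega>] by simp
    finally show ?thesis
      using ring_hom_k_fact_mult_eq_0[OF ofk] 3 by simp
  qed (simp_all add: fps_compose_nth Mser_def)
qed

lemma Mser_antipode_inverse:
  fixes ofk :: "'k::field_char_0 \<Rightarrow> 'a::comm_ring_1"
    and \<omega> :: "((nat set \<times> 'm) set, 'k) mpoly \<Rightarrow> 'a"
    and S :: "((nat set \<times> 'm) set, 'k) mpoly \<Rightarrow> ((nat set \<times> 'm) set, 'k) mpoly"
  assumes "ring_hom_k ofk" "alg_hom_on (NM M rl) ofk \<omega>" "is_antipode M rl \<eta> S"
  shows "Mser M rl ofk \<omega> oo Mser M rl ofk (\<omega> \<circ> S) = fps_X"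
    "Mser M rl ofk (\<omega> \<circ> S) oo Mser M rl ofk \<omega> = fps_X"
  using Mser_compose_antipode[OF assms]
    fps_compose_left_inverse_imp_right_inverse[OF Mser_nth_0 Mser_nth_0 Mser_nth_1]
  by auto

end

theorem mainTheorem4:
  fixes M :: "nat set \<Rightarrow> 'm set"
    and rl :: "(nat \<Rightarrow> nat) \<Rightarrow> nat set \<Rightarrow> 'm \<Rightarrow> 'm"
    and \<eta> :: "nat set set \<times> (nat set \<Rightarrow> 'm) \<Rightarrow> 'm \<Rightarrow> 'm"
    and ofk :: "'k::field_char_0 \<Rightarrow> 'a::comm_ring_1"
    and \<omega> :: "((nat set \<times> 'm) set, 'k) mpoly \<Rightarrow> 'a"
  assumes "set_operad M rl \<eta>"
    and "ring_hom_k ofk"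
    and "alg_hom_on (NM M rl) ofk \<omega>"
  shows "(\<exists>S :: ((nat set \<times> 'm) set, 'k) mpoly \<Rightarrow> ((nat set \<times> 'm) set, 'k) mpoly. is_antipode M rl \<eta> S) \<and>
    (\<forall>S. is_antipode M rl \<eta> S \<longrightarrow>
       Mser M rl ofk \<omega> oo Mser M rl ofk (\<omega> \<circ> S) = fps_X \<and>
       Mser M rl ofk (\<omega> \<circ> S) oo Mser M rl ofk \<omega> = fps_X \<and>
       Mser M rl pconst S oo Mser M rl pconst (\<lambda>p. p) = fps_X \<and>
       Mser M rl pconst (\<lambda>p. p) oo Mser M rl pconst S = fps_X)"
proof -
  interpret set_operad_on M rl \<eta>
    by unfold_locales (rule assms(1))
  have pconst: "ring_hom_k (pconst :: 'k \<Rightarrow> ((nat set \<times> 'm) set, 'k) mpoly)"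
    by (simp add: ring_hom_k_def pconst_add pconst_mult)
  have id: "alg_hom_on (NM M rl) pconst (\<lambda>p. p)"
    by (simp add: alg_hom_on_def)
  show ?thesis
    using is_antipode_antipode Mser_antipode_inverse[OF assms(2,3)]
      Mser_antipode_inverse[OF pconst id] by (auto simp: comp_def)
qed

end
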